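(* Let $x$ be a large parameter and let $z > \exp(3\lambda \log \log \lambda)$. As $x \to \infty$, \[ \sum_{m \leq z} \frac{t(m)}{\sqrt{m}} \sim \prod_p \left(1 + \frac{t(p)}{\sqrt{p}}\right) = \exp\left((1 + o(1)) \frac{\lambda}{2\log \lambda}\right).\] Also, with $\alpha = (\log \lambda)^{-3}$, \[ x^{-\alpha} \sum_{\substack{m_1, m_2 \leq z\\ (m_1, m_2) = 1}}\frac{r(m_1)r(m_2)}{(m_1m_2)^{\frac{1}{2}-\alpha}}\sum_{(d, m_1m_2) = 1}r(d)^2d^\alpha \Bigg/ \left(\left(\sum_{m \leq x} \frac{t(m)}{\sqrt{m}}\right)^2 \sum_d r(d)^2\right) \leq \exp\left(-(1 + o(1))\frac{32 \log x}{(\log\log x)^4}\right).\]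
   Context: Let $x$ be large and $\lambda = \sqrt{\log x \log\log x}$. Define the multiplicative function $r$ by $r(p) = \frac{\lambda}{\sqrt{p}\log p}$ for primes $\lambda^2 \le p \le \exp((\log\lambda)^2)$, $r(p)=0$ for other primes, and $r(p^n)=0$ for $n\ge2$. Define the multiplicative function $t$ by $t(p^n) = \frac{r(p^n)}{1+r(p^n)^2}$. Products over $p$ are over primes. *)

theory Defs
  imports "HOL-Analysis.Analysis" "HOL-Library.Landau_Symbols" "HOL-Computational_Algebra.Primes"
begin

definition lam :: "real \<Rightarrow> real" where
  "lam x = sqrt (ln x * ln (ln x))"

definition r_prime :: "real \<Rightarrow> nat \<Rightarrow> real" where
  "r_prime x p = (if prime p \<and> lam x ^ 2 \<le> real p \<and> real p \<le> exp ((ln (lam x))^2)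
                  then lam x / (sqrt (real p) * ln (real p)) else 0)"

definition r_pp :: "real \<Rightarrow> nat \<Rightarrow> nat \<Rightarrow> real" where
  "r_pp x p k = (if k = 1 then r_prime x p else 0)"

definition r :: "real \<Rightarrow> nat \<Rightarrow> real" where
  "r x n = (if n = 0 then 0 else \<Prod>p\<in>prime_factors n. r_pp x p (multiplicity p n))"

definition t_pp :: "real \<Rightarrow> nat \<Rightarrow> nat \<Rightarrow> real" where
  "t_pp x p k = r x (p ^ k) / (1 + (r x (p ^ k))^2)"

definition t :: "real \<Rightarrow> nat \<Rightarrow> real" where
  "t x n = (if n = 0 then 0 else \<Prod>p\<in>prime_factors n. t_pp x p (multiplicity p n))"

end

theory Submission
  imports Defs "HOL-Real_Asymp.Real_Asymp"
begin

text \<open>The functions \<open>r\<close> and \<open>t\<close> are supported on squarefree products of primes from the window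
  \<open>W = [\<lambda>^2, exp ((ln \<lambda>)^2)]\<close>, so every sum over \<open>m\<close> or \<open>d\<close> is a finite sum over subsets of \<open>W\<close>
  and the complete sums factor into products over \<open>W\<close>.  Rankin's trick with the exponent
  \<open>(ln \<lambda>)^(-3)\<close> shows that the terms with \<open>m > z\<close> contribute \<open>o(P)\<close> to \<open>P = \<Prod>(1 + t(p)/\<surd>p)\<close>.
  Since \<open>t(p)/\<surd>p\<close> is close to \<open>\<lambda>/(p ln p)\<close>, \<open>ln P\<close> is \<open>\<lambda> \<Sum>(1/(p ln p))\<close> over \<open>W\<close> up to a factor
  \<open>1 + o(1)\<close>, and Mertens' estimate (derived from Chebyshev's bound by partial summation) evaluates
  this as \<open>\<lambda>/(2 ln \<lambda>)\<close>.  In the double sum, coprimality of \<open>m1\<close>, \<open>m2\<close> and \<open>d\<close> makes the summand factor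
  prime by prime, so the sum is at most \<open>\<Prod>(1 + r(p)^2 p^\<alpha>) (\<Prod>(1 + u(p)))^2\<close> with
  \<open>u(p) = r(p) p^(\<alpha>-1/2) / (1 + r(p)^2 p^\<alpha>)\<close>; each product exceeds its \<open>\<alpha> = 0\<close> counterpart by a
  factor \<open>exp (O(\<lambda>^2 \<alpha> / ln \<lambda>))\<close>, which \<open>x^(-\<alpha>)\<close> outweighs.\<close>

section \<open>Mertens' estimate\<close>

definition primes_upto :: "nat \<Rightarrow> nat set" where
  "primes_upto n = {p. prime p \<and> p \<le> n}"

lemma finite_primes_upto [simp]: "finite (primes_upto n)"
  unfolding primes_upto_def by (rule finite_subset[of _ "{..n}"]) auto

definition chebyshev_theta :: "nat \<Rightarrow> real" where
  "chebyshev_theta n = (\<Sum>p\<in>primes_upto n. ln (real p))"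

definition mertens_sum :: "nat \<Rightarrow> real" where
  "mertens_sum n = (\<Sum>p\<in>primes_upto n. ln (real p) / real p)"

lemma ln_eq_sum_multiplicity:
  fixes m :: nat
  assumes "m > 0" "finite Q" "prime_factors m \<subseteq> Q" "\<forall>p\<in>Q. prime p"
  shows "ln (real m) = (\<Sum>p\<in>Q. real (multiplicity p m) * ln (real p))"
proof -
  have "real m = real (\<Prod>p\<in>prime_factors m. p ^ multiplicity p m)"
    using prime_factorization_nat[OF assms(1)] by simp
  hence "real m = (\<Prod>p\<in>prime_factors m. real p ^ multiplicity p m)" by simp
  hence "ln (real m) = (\<Sum>p\<in>prime_factors m. ln (real p ^ multiplicity p m))"
    by (auto intro: ln_prod dest: in_prime_factors_imp_prime simp: prime_gt_0_nat)
  also have "\<dots> = (\<Sum>p\<in>prime_factors m. real (multiplicity p m) * ln (real p))"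
    by (intro sum.cong refl) (auto dest: in_prime_factors_imp_prime simp: prime_gt_0_nat ln_realpow)
  also have "\<dots> = (\<Sum>p\<in>Q. real (multiplicity p m) * ln (real p))"
  proof (rule sum.mono_neutral_left[OF assms(2,3)], intro ballI)
    fix q assume "q \<in> Q - prime_factors m"
    hence "\<not> q dvd m" using assms(1,4) by (auto simp: prime_factors_dvd)
    thus "real (multiplicity q m) * ln (real q) = 0" by (simp add: not_dvd_imp_multiplicity_0)
  qed
  finally show ?thesis .
qed

lemma ln_fact_eq_sum_multiplicity:
  "ln (fact n :: real) = (\<Sum>p\<in>primes_upto n. real (multiplicity p (fact n :: nat)) * ln (real p))"
proof -
  have "ln (fact n :: real) = ln (real (fact n :: nat))" by (simp add: of_nat_fact)
  also have "\<dots> = (\<Sum>p\<in>primes_upto n. real (multiplicity p (fact n :: nat)) * ln (real p))"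
    by (rule ln_eq_sum_multiplicity) (auto simp: primes_upto_def prime_factors_dvd prime_dvd_fact_iff)
  finally show ?thesis .
qed

lemma multiplicity_le_self:
  fixes p m :: nat
  assumes "prime p" "m > 0"
  shows "multiplicity p m \<le> m"
proof -
  have "p ^ multiplicity p m \<le> m"
    using assms by (intro dvd_imp_le multiplicity_dvd) auto
  moreover have "multiplicity p m < p ^ multiplicity p m"
    using prime_ge_2_nat[OF assms(1)] by (intro less_exp[THEN less_le_trans]) (auto intro!: power_mono)
  ultimately show ?thesis by simp
qed

lemma multiplicity_eq_card_prime_power_dvd:
  fixes p m :: nat
  assumes "prime p" "m > 0" "multiplicity p m \<le> M"
  shows "multiplicity p m = card {k\<in>{1..M}. p ^ k dvd m}"
proof -
  have "\<not> is_unit p" using prime_gt_1_nat[OF assms(1)] by auto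
  hence "{k\<in>{1..M}. p ^ k dvd m} = {1..multiplicity p m}"
    using assms by (auto simp: power_dvd_iff_le_multiplicity)
  thus ?thesis by simp
qed

lemma multiplicity_fact:
  fixes p :: nat
  assumes "prime p"
  shows "multiplicity p (fact n) = (\<Sum>k\<in>{1..n}. n div p ^ k)"
proof (induction n)
  case 0
  then show ?case by simp
next
  case (Suc n)
  have p1: "p > 1" using assms prime_gt_1_nat by auto
  define dvds where "dvds = (\<Sum>k\<in>{1..Suc n}. if p ^ k dvd Suc n then 1 else (0::nat))"
  have "multiplicity p (fact (Suc n) :: nat) = multiplicity p (Suc n) + multiplicity p (fact n :: nat)"
    unfolding fact_Suc of_nat_id
    by (rule prime_elem_multiplicity_mult_distrib) (use assms in auto)
  also have "multiplicity p (Suc n) = card {k\<in>{1..Suc n}. p ^ k dvd Suc n}"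
    by (rule multiplicity_eq_card_prime_power_dvd[OF assms]) (auto intro: multiplicity_le_self[OF assms])
  also have "\<dots> = dvds"
    unfolding dvds_def using sum.inter_filter[of "{1..Suc n}" "\<lambda>_. 1::nat" "\<lambda>k. p^k dvd Suc n"] by simp
  finally have step: "multiplicity p (fact (Suc n) :: nat) = dvds + multiplicity p (fact n :: nat)" .
  have "n < 2 ^ Suc n" by (meson less_exp Suc_lessD less_trans_Suc lessI less_le_trans order.refl)
  also have "(2::nat) ^ Suc n \<le> p ^ Suc n" using p1 by (intro power_mono) auto
  finally have "(\<Sum>k\<in>{1..Suc n}. n div p ^ k) = (\<Sum>k\<in>{1..n}. n div p ^ k)" by simp
  moreover have "(\<Sum>k\<in>{1..Suc n}. Suc n div p ^ k) = (\<Sum>k\<in>{1..Suc n}. n div p ^ k) + dvds"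
    unfolding dvds_def sum.distrib[symmetric] using p1
    by (intro sum.cong refl) (auto simp: div_Suc mod_eq_0_iff_dvd)
  ultimately show ?case using Suc step by simp
qed

lemma div_le_multiplicity_fact:
  fixes p :: nat assumes "prime p"
  shows "n div p \<le> multiplicity p (fact n :: nat)"
proof (cases "n = 0")
  case False
  have "n div p ^ 1 \<le> (\<Sum>k\<in>{1..n}. n div p ^ k)"
    using False by (intro member_le_sum) auto
  thus ?thesis using multiplicity_fact[OF assms] by simp
qed simp

lemma sum_inverse_powers:
  fixes q :: real assumes "q > 1"
  shows "(\<Sum>k\<in>{1..n}. (1/q) ^ k) = (1 - (1/q) ^ n) / (q - 1)"
proof (induction n)
  case (Suc n)
  have "{1..Suc n} = insert (Suc n) {1..n}" by auto
  hence "(\<Sum>k\<in>{1..Suc n}. (1/q) ^ k) = (1/q) ^ Suc n + (1 - (1/q) ^ n) / (q - 1)"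
    using Suc by simp
  also have "\<dots> = (1 - (1/q) ^ Suc n) / (q - 1)"
    using assms by (simp add: field_simps power_Suc)
  finally show ?case .
qed simp

lemma multiplicity_fact_le:
  fixes p :: nat assumes "prime p"
  shows "real (multiplicity p (fact n :: nat)) \<le> real n / (real p - 1)"
proof -
  have p1: "real p > 1" using prime_gt_1_nat[OF assms] by simp
  have "real (multiplicity p (fact n :: nat)) = (\<Sum>k\<in>{1..n}. real (n div p ^ k))"
    using multiplicity_fact[OF assms] by simp
  also have "\<dots> \<le> (\<Sum>k\<in>{1..n}. real n * (1 / real p) ^ k)"
  proof (intro sum_mono)
    fix k
    have "real (n div p ^ k) \<le> real n / real (p ^ k)" by (rule of_nat_div_le_of_nat)
    thus "real (n div p ^ k) \<le> real n * (1 / real p) ^ k" by (simp add: power_divide)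
  qed
  also have "\<dots> = real n * (\<Sum>k\<in>{1..n}. (1 / real p) ^ k)"
    by (rule sum_distrib_left[symmetric])
  also have "\<dots> = real n * ((1 - (1 / real p) ^ n) / (real p - 1))"
    by (simp only: sum_inverse_powers[OF p1])
  also have "\<dots> \<le> real n * (1 / (real p - 1))"
    using p1 by (intro mult_left_mono divide_right_mono) auto
  finally show ?thesis by simp
qed

lemma ln_fact_le: "ln (fact n :: real) \<le> real n * ln (real n)"
proof (cases "n = 0")
  case False
  have "(fact n :: real) \<le> real n ^ n"
    by (metis fact_le_power of_nat_fact of_nat_le_iff of_nat_power)
  hence "ln (fact n :: real) \<le> ln (real n ^ n)" using False by (intro ln_mono) auto
  thus ?thesis using False by (simp add: ln_realpow)
qed simp

lemma ln_Suc_minus_ln_le: "n > 0 \<Longrightarrow> ln (real (Suc n)) - ln (real n) \<le> 1 / real n"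
proof -
  assume n: "n > 0"
  have "ln (real (Suc n)) - ln (real n) = ln (real (Suc n) / real n)" using n by (simp add: ln_div)
  also have "\<dots> \<le> real (Suc n) / real n - 1" using n by (intro ln_le_minus_one) auto
  also have "\<dots> = 1 / real n" using n by (simp add: field_simps)
  finally show ?thesis .
qed

lemma ln_fact_ge: "ln (fact n :: real) \<ge> real n * ln (real n) - real n"
proof (induction n)
  case (Suc n)
  show ?case
  proof (cases "n = 0")
    case False
    have "real n * (ln (real (Suc n)) - ln (real n)) \<le> real n * (1 / real n)"
      using ln_Suc_minus_ln_le[of n] False by (intro mult_left_mono) auto
    hence key: "real n * ln (real (Suc n)) \<le> real n * ln (real n) + 1"
      using False by (simp add: algebra_simps)
    have "ln (fact (Suc n) :: real) = ln (real (Suc n)) + ln (fact n)"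
      by (simp add: ln_mult del: of_nat_Suc)
    thus ?thesis using Suc key by (simp add: algebra_simps)
  qed simp
qed simp

lemma prime_dvd_central_binomial:
  fixes p n :: nat
  assumes "prime p" "n < p" "p \<le> 2 * n"
  shows "p dvd (2 * n choose n)"
proof -
  have "fact n * fact (2*n - n) * (2*n choose n) = (fact (2*n) :: nat)"
    by (rule binomial_fact_lemma) simp
  hence eq: "fact n * fact n * (2*n choose n) = (fact (2*n) :: nat)" by simp
  have "p dvd (fact (2*n) :: nat)" using assms by (simp add: prime_dvd_fact_iff)
  hence "p dvd fact n * fact n * (2*n choose n)" by (subst eq)
  moreover have "\<not> p dvd (fact n :: nat)" using assms by (simp add: prime_dvd_fact_iff)
  ultimately show ?thesis using assms(1) by (auto simp: prime_dvd_mult_iff)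
qed

lemma sum_ln_primes_le_ln_central_binomial:
  "(\<Sum>p\<in>primes_upto (2*n) - primes_upto n. ln (real p)) \<le> ln (real (2 * n choose n))"
proof -
  define C where "C = (2 * n choose n)"
  have C0: "C > 0" unfolding C_def by simp
  have "prime_factors C \<subseteq> primes_upto (2 * n)"
  proof
    fix p assume p: "p \<in> prime_factors C"
    hence pp: "prime p" "p dvd C" using C0 by (auto simp: prime_factors_dvd)
    have "C dvd (fact (2*n) :: nat)"
      using binomial_fact_lemma[of n "2*n"] unfolding C_def
      by (metis dvd_triv_right le_add2 mult_2)
    hence "p dvd (fact (2*n) :: nat)" using pp(2) by (rule dvd_trans[rotated])
    thus "p \<in> primes_upto (2*n)" using pp by (simp add: primes_upto_def prime_dvd_fact_iff)
  qed
  hence lnC: "ln (real C) = (\<Sum>p\<in>primes_upto (2*n). real (multiplicity p C) * ln (real p))"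
    using C0 by (intro ln_eq_sum_multiplicity) (auto simp: primes_upto_def)
  have "(\<Sum>p\<in>primes_upto (2*n) - primes_upto n. ln (real p))
        \<le> (\<Sum>p\<in>primes_upto (2*n) - primes_upto n. real (multiplicity p C) * ln (real p))"
  proof (intro sum_mono)
    fix p assume p: "p \<in> primes_upto (2*n) - primes_upto n"
    hence pp: "prime p" "n < p" "p \<le> 2*n" by (auto simp: primes_upto_def)
    have "p dvd C" unfolding C_def by (rule prime_dvd_central_binomial[OF pp])
    hence "multiplicity p C \<ge> 1" using C0 pp(1)
      by (intro multiplicity_geI) (auto simp: prime_gt_1_nat)
    moreover have "ln (real p) \<ge> 0" using prime_gt_0_nat[OF pp(1)] by simp
    ultimately show "ln (real p) \<le> real (multiplicity p C) * ln (real p)"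
      by (metis mult_le_cancel_right1 of_nat_1 of_nat_le_iff order.strict_iff_not)
  qed
  also have "\<dots> \<le> (\<Sum>p\<in>primes_upto (2*n). real (multiplicity p C) * ln (real p))"
    by (intro sum_mono2) (auto simp: primes_upto_def Suc_le_eq prime_gt_0_nat)
  finally show ?thesis using lnC unfolding C_def by simp
qed

lemma chebyshev_theta_mono: "m \<le> n \<Longrightarrow> chebyshev_theta m \<le> chebyshev_theta n"
  unfolding chebyshev_theta_def
  by (intro sum_mono2) (auto simp: primes_upto_def dest: prime_gt_1_nat)

lemma chebyshev_theta_double_le: "chebyshev_theta (2 * n) \<le> chebyshev_theta n + 2 * real n"
proof -
  have "chebyshev_theta (2*n) - chebyshev_theta n = (\<Sum>p\<in>primes_upto (2*n) - primes_upto n. ln (real p))"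
    unfolding chebyshev_theta_def by (subst sum_diff) (auto simp: primes_upto_def)
  also have "\<dots> \<le> ln (real (2 * n choose n))" by (rule sum_ln_primes_le_ln_central_binomial)
  also have "\<dots> \<le> ln (2 ^ (2*n))"
    by (intro ln_mono) (auto simp del: of_nat_power simp add: of_nat_power[symmetric] binomial_le_pow2)
  also have "ln ((2::real) ^ (2*n)) \<le> 2 * real n"
    using ln_2_less_1 by (simp add: ln_realpow mult_left_le)
  finally show ?thesis by simp
qed

lemma chebyshev_theta_le: "chebyshev_theta n \<le> 6 * real n"
proof (induction n rule: less_induct)
  case (less n)
  show ?case
  proof (cases "n \<le> 1")
    case True
    hence "primes_upto n = {}" by (auto simp: primes_upto_def dest: prime_gt_1_nat)
    thus ?thesis by (simp add: chebyshev_theta_def)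
  next
    case False
    define m where "m = n div 2"
    have "n = 2*m \<or> n = 2*m+1" unfolding m_def by presburger
    thus ?thesis
    proof
      assume n: "n = 2*m"
      hence "chebyshev_theta m \<le> 6 * real m" using False by (intro less) simp
      thus ?thesis using chebyshev_theta_double_le[of m] n by simp
    next
      assume n: "n = 2*m+1"
      hence "chebyshev_theta (m+1) \<le> 6 * real (m+1)" using False by (intro less) simp
      moreover have "chebyshev_theta n \<le> chebyshev_theta (2*(m+1))" using n by (intro chebyshev_theta_mono) simp
      ultimately show ?thesis using chebyshev_theta_double_le[of "m+1"] n False by simp
    qed
  qed
qed

lemma ln_2_ge_half: "ln (2::real) \<ge> 1/2"
  using ln_le_minus_one[of "1/2::real"] by (simp add: ln_div)

lemma sum_ln_div_consecutive_le:
  assumes "n \<ge> 2"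
  shows "(\<Sum>k\<in>{2..n}. ln (real k) / (real k * (real k - 1)))
           \<le> 1/2 + (ln 2 + 1) - 2 * ((ln (real n) + 1) / real n)"
  using assms
proof (induction n rule: dec_induct)
  case base
  then show ?case using ln_2_less_1 by (simp add: field_simps)
next
  case (step n)
  have n2: "real n \<ge> 2" using step by simp
  have "{2..Suc n} = insert (Suc n) {2..n}" using step by auto
  hence split: "(\<Sum>k\<in>{2..Suc n}. ln (real k) / (real k * (real k - 1)))
     = ln (real n + 1) / ((real n + 1) * real n) + (\<Sum>k\<in>{2..n}. ln (real k) / (real k * (real k - 1)))"
    by (simp add: add.commute)
  have "ln (real n + 1) - ln (real n) \<le> 1 / real n"
    using ln_Suc_minus_ln_le[of n] n2 by (simp add: add.commute)
  hence "(2 * real n + 1) * (ln (real n + 1) - ln (real n)) \<le> (2 * real n + 1) * (1 / real n)"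
    using n2 by (intro mult_left_mono) auto
  also have "\<dots> \<le> 2 + 1/2" using n2 by (simp add: field_simps)
  finally have key: "(2 * real n + 1) * (ln (real n + 1) - ln (real n)) - ln (real n) \<le> 2"
    using ln_2_ge_half ln_mono[of 2 "real n"] n2 by linarith
  have "2 * ((ln (real n) + 1) / real n) - 2 * ((ln (real n + 1) + 1) / (real n + 1))
        - ln (real n + 1) / ((real n + 1) * real n)
      = (2 - ((2 * real n + 1) * (ln (real n + 1) - ln (real n)) - ln (real n))) / ((real n + 1) * real n)"
    using n2 by (simp add: divide_simps) (simp add: algebra_simps)
  also have "\<dots> \<ge> 0" using key n2 by (intro divide_nonneg_pos) auto
  finally have "ln (real n + 1) / ((real n + 1) * real n)
      \<le> 2 * ((ln (real n) + 1) / real n) - 2 * ((ln (real n + 1) + 1) / (real n + 1))" by simp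
  with split step.IH show ?case by (simp only: of_nat_Suc add.commute)
qed

lemma sum_ln_div_prime_prime_minus_1_le:
  "(\<Sum>p\<in>primes_upto n. ln (real p) / (real p * (real p - 1))) \<le> 5/2"
proof (cases "n \<ge> 2")
  case True
  have "(\<Sum>p\<in>primes_upto n. ln (real p) / (real p * (real p - 1)))
      \<le> (\<Sum>k\<in>{2..n}. ln (real k) / (real k * (real k - 1)))"
    by (intro sum_mono2) (auto simp: primes_upto_def prime_ge_2_nat)
  also have "\<dots> \<le> 1/2 + (ln 2 + 1) - 2 * ((ln (real n) + 1) / real n)"
    by (rule sum_ln_div_consecutive_le[OF True])
  also have "\<dots> \<le> 1/2 + (1 + 1) - 0"
    using ln_2_less_1 True by (intro diff_mono add_mono) auto
  finally show ?thesis by simp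
next
  case False
  hence "primes_upto n = {}" by (auto simp: primes_upto_def dest: prime_ge_2_nat)
  thus ?thesis by simp
qed

lemma mertens_sum_le: "mertens_sum n \<le> ln (real n) + 6"
proof (cases "n = 0")
  case True
  hence "primes_upto n = {}" by (auto simp: primes_upto_def dest: prime_gt_0_nat)
  thus ?thesis using True by (simp add: mertens_sum_def)
next
  case False
  have "real n * mertens_sum n - chebyshev_theta n
      = (\<Sum>p\<in>primes_upto n. (real n / real p - 1) * ln (real p))"
    unfolding mertens_sum_def chebyshev_theta_def
    by (simp add: sum_distrib_left sum_subtractf algebra_simps)
  also have "\<dots> \<le> (\<Sum>p\<in>primes_upto n. real (multiplicity p (fact n :: nat)) * ln (real p))"
  proof (intro sum_mono mult_right_mono)
    fix p assume p: "p \<in> primes_upto n"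
    hence pp: "prime p" by (simp add: primes_upto_def)
    have "real n = real p * real (n div p) + real (n mod p)"
      by (metis div_mult_mod_eq mult.commute of_nat_add of_nat_mult)
    moreover have "real (n mod p) < real p" using prime_gt_0_nat[OF pp] by simp
    ultimately have "real n / real p - 1 \<le> real (n div p)"
      using prime_gt_0_nat[OF pp] by (simp add: field_simps)
    thus "real n / real p - 1 \<le> real (multiplicity p (fact n :: nat))"
      using div_le_multiplicity_fact[OF pp, of n] by linarith
    show "ln (real p) \<ge> 0" using prime_gt_0_nat[OF pp] by simp
  qed
  also have "\<dots> = ln (fact n :: real)" by (rule ln_fact_eq_sum_multiplicity[symmetric])
  also have "\<dots> \<le> real n * ln (real n)" by (rule ln_fact_le)
  finally have "real n * mertens_sum n \<le> real n * (ln (real n) + 6)"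
    using chebyshev_theta_le[of n] by (simp add: algebra_simps)
  thus ?thesis using False by simp
qed

lemma mertens_sum_ge: "mertens_sum n \<ge> ln (real n) - 4"
proof (cases "n = 0")
  case True
  hence "primes_upto n = {}" by (auto simp: primes_upto_def dest: prime_gt_0_nat)
  thus ?thesis using True by (simp add: mertens_sum_def)
next
  case False
  have split: "real n / (real p - 1) * ln (real p)
      = real n * (ln (real p) / real p + ln (real p) / (real p * (real p - 1)))"
    if "p \<in> primes_upto n" for p
  proof -
    have "real p \<ge> 2" using that by (auto simp: primes_upto_def dest: prime_ge_2_nat)
    thus ?thesis by (simp add: field_simps)
  qed
  have "real n * ln (real n) - real n \<le> ln (fact n :: real)" by (rule ln_fact_ge)
  also have "\<dots> = (\<Sum>p\<in>primes_upto n. real (multiplicity p (fact n :: nat)) * ln (real p))"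
    by (rule ln_fact_eq_sum_multiplicity)
  also have "\<dots> \<le> (\<Sum>p\<in>primes_upto n. real n / (real p - 1) * ln (real p))"
    by (intro sum_mono mult_right_mono)
      (auto simp: primes_upto_def multiplicity_fact_le dest: prime_gt_0_nat)
  also have "\<dots> = real n * (mertens_sum n + (\<Sum>p\<in>primes_upto n. ln (real p) / (real p * (real p - 1))))"
    unfolding mertens_sum_def sum.distrib[symmetric] sum_distrib_left
    by (rule sum.cong[OF refl split])
  also have "\<dots> \<le> real n * (mertens_sum n + 5/2)"
    using sum_ln_div_prime_prime_minus_1_le[of n] by (intro mult_left_mono) auto
  finally have "real n * (ln (real n) - 1) \<le> real n * (mertens_sum n + 5/2)" by (simp add: algebra_simps)
  thus ?thesis using False by simp
qed

lemma abs_mertens_sum_minus_ln_le: "\<bar>mertens_sum n - ln (real n)\<bar> \<le> 6"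
  using mertens_sum_le[of n] mertens_sum_ge[of n] by linarith

section \<open>Sums of \<open>1/p\<close> and \<open>1/(p log p)\<close> over a range of primes\<close>

lemma sum_greaterThanAtMost_telescope:
  fixes f :: "nat \<Rightarrow> 'a::ab_group_add"
  assumes "a \<le> b"
  shows "(\<Sum>n\<in>{a<..b}. f n - f (n - 1)) = f b - f a"
  using sum_telescope''[OF assms, of f] by (simp add: atLeastSucAtMost_greaterThanAtMost)

lemma summation_by_parts:
  fixes R g :: "nat \<Rightarrow> real"
  assumes "a \<le> b"
  shows "(\<Sum>n\<in>{a<..b}. (R n - R (n - 1)) * g n)
       = R b * g (b + 1) - R a * g (a + 1) + (\<Sum>n\<in>{a<..b}. R n * (g n - g (n + 1)))"
  using assms
proof (induction b rule: dec_induct)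
  case (step b)
  have "{a<..Suc b} = insert (Suc b) {a<..b}" using step by auto
  thus ?case using step.IH by (simp add: algebra_simps)
qed simp

lemma partial_summation_ln:
  fixes c g :: "nat \<Rightarrow> real" and K :: real
  assumes R: "\<And>n. \<bar>(\<Sum>k\<in>{1..n}. c k) - ln (real n)\<bar> \<le> K"
  assumes mono: "\<And>m n. a < m \<Longrightarrow> m \<le> n \<Longrightarrow> g n \<le> g m"
  assumes nonneg: "\<And>n. a < n \<Longrightarrow> g n \<ge> 0"
  assumes ab: "a \<le> b"
  shows "\<bar>(\<Sum>n\<in>{a<..b}. c n * g n) - (\<Sum>n\<in>{a<..b}. (ln (real n) - ln (real (n - 1))) * g n)\<bar>
          \<le> 2 * K * g (a + 1)"
proof -
  define R where "R n = (\<Sum>k\<in>{1..n}. c k) - ln (real n)" for n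
  have RK: "\<bar>R n\<bar> \<le> K" for n using R[of n] unfolding R_def .
  have cR: "c n = (R n - R (n - 1)) + (ln (real n) - ln (real (n - 1)))" if "n > 0" for n
  proof -
    have "{1..n} = insert n {1..n - 1}" "n \<notin> {1..n - 1}" using that by auto
    hence "(\<Sum>k\<in>{1..n}. c k) = c n + (\<Sum>k\<in>{1..n-1}. c k)" by simp
    thus ?thesis unfolding R_def by simp
  qed
  have "(\<Sum>n\<in>{a<..b}. c n * g n) - (\<Sum>n\<in>{a<..b}. (ln (real n) - ln (real (n - 1))) * g n)
      = (\<Sum>n\<in>{a<..b}. (R n - R (n - 1)) * g n)"
    by (subst sum_subtractf[symmetric]) (intro sum.cong refl, auto simp: cR algebra_simps)
  also have "\<dots> = R b * g (b + 1) - R a * g (a + 1) + (\<Sum>n\<in>{a<..b}. R n * (g n - g (n + 1)))"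
    by (rule summation_by_parts[OF ab])
  finally have eq: "(\<Sum>n\<in>{a<..b}. c n * g n) - (\<Sum>n\<in>{a<..b}. (ln (real n) - ln (real (n - 1))) * g n)
      = R b * g (b + 1) - R a * g (a + 1) + (\<Sum>n\<in>{a<..b}. R n * (g n - g (n + 1)))" .
  have g1: "0 \<le> g (b+1)" "g (b+1) \<le> g (a+1)" "0 \<le> g (a+1)" using ab by (auto intro: nonneg mono)
  have "\<bar>\<Sum>n\<in>{a<..b}. R n * (g n - g (n + 1))\<bar> \<le> (\<Sum>n\<in>{a<..b}. K * (g n - g (n + 1)))"
  proof (rule order_trans[OF sum_abs sum_mono])
    fix n assume n: "n \<in> {a<..b}"
    have "g (n+1) \<le> g n" using n by (intro mono) auto
    thus "\<bar>R n * (g n - g (n + 1))\<bar> \<le> K * (g n - g (n + 1))"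
      using RK[of n] by (simp add: abs_mult mult_right_mono)
  qed
  also have "\<dots> = K * (g (a + 1) - g (b + 1))"
    using sum_greaterThanAtMost_telescope[OF ab, of "\<lambda>n. - g (n + 1)"]
    by (simp add: sum_distrib_left[symmetric])
  finally have E: "\<bar>\<Sum>n\<in>{a<..b}. R n * (g n - g (n + 1))\<bar> \<le> K * (g (a + 1) - g (b + 1))" .
  have "\<bar>R b * g (b + 1)\<bar> \<le> K * g (b+1)" "\<bar>R a * g (a + 1)\<bar> \<le> K * g (a+1)"
    using RK[of a] RK[of b] g1 by (simp_all add: abs_mult mult_right_mono)
  thus ?thesis unfolding eq using E by (simp add: algebra_simps)
qed

definition primes_between :: "nat \<Rightarrow> nat \<Rightarrow> nat set" where
  "primes_between a b = {p. prime p \<and> a < p \<and> p \<le> b}"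

lemma finite_primes_between [simp]: "finite (primes_between a b)"
  unfolding primes_between_def by (rule finite_subset[of _ "{..b}"]) auto

lemma sum_greaterThanAtMost_primes:
  assumes "\<And>n. \<not> prime n \<Longrightarrow> f n = 0"
  shows "(\<Sum>n\<in>{a<..b}. f n) = (\<Sum>p\<in>primes_between a b. f p)"
proof -
  have "(\<Sum>n\<in>{a<..b}. f n) = (\<Sum>n\<in>{a<..b}. if prime n then f n else 0)"
    using assms by (intro sum.cong) auto
  also have "\<dots> = (\<Sum>n\<in>{n\<in>{a<..b}. prime n}. f n)" by (subst sum.inter_filter) auto
  also have "{n\<in>{a<..b}. prime n} = primes_between a b" by (auto simp: primes_between_def)
  finally show ?thesis .
qed

lemma abs_sum_mertens_weights_minus_ln_le:
  "\<bar>(\<Sum>k\<in>{1..n}. if prime k then ln (real k) / real k else 0) - ln (real n)\<bar> \<le> 6"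
proof -
  have "(\<Sum>k\<in>{1..n}. if prime k then ln (real k) / real k else 0) = mertens_sum n"
    unfolding mertens_sum_def sum.inter_filter[symmetric, OF finite_atLeastAtMost]
    by (intro sum.cong refl) (auto simp: primes_upto_def dest: prime_gt_0_nat)
  thus ?thesis using abs_mertens_sum_minus_ln_le by simp
qed

lemma partial_summation_primes:
  fixes g :: "nat \<Rightarrow> real"
  assumes mono: "\<And>m n. a < m \<Longrightarrow> m \<le> n \<Longrightarrow> g n \<le> g m"
  assumes nonneg: "\<And>n. a < n \<Longrightarrow> g n \<ge> 0"
  assumes ab: "a \<le> b"
  shows "\<bar>(\<Sum>p\<in>primes_between a b. ln (real p) / real p * g p)
           - (\<Sum>n\<in>{a<..b}. (ln (real n) - ln (real (n - 1))) * g n)\<bar> \<le> 12 * g (a + 1)"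
proof -
  have "(\<Sum>n\<in>{a<..b}. (if prime n then ln (real n) / real n else 0) * g n)
      = (\<Sum>p\<in>primes_between a b. ln (real p) / real p * g p)"
    by (subst sum_greaterThanAtMost_primes) (auto intro!: sum.cong simp: primes_between_def)
  thus ?thesis
    using partial_summation_ln[where c = "\<lambda>k. if prime k then ln (real k) / real k else 0" and g = g,
        OF abs_sum_mertens_weights_minus_ln_le mono nonneg ab] by simp
qed

lemma ln_increment_div_ln_sq_bounds:
  fixes a n :: nat
  assumes "2 \<le> a" "a < n"
  shows "(ln (real n) - ln (real (n - 1))) * (1 / (ln (real n))^2)
           \<le> 1 / ln (real (n - 1)) - 1 / ln (real n)"
    and "(1 - 1 / real a) * (1 / ln (real (n - 1)) - 1 / ln (real n))
           \<le> (ln (real n) - ln (real (n - 1))) * (1 / (ln (real n))^2)"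
proof -
  define u where "u = ln (real (n - 1))"
  define w where "w = ln (real n)"
  have n3: "n \<ge> 3" "real (n - 1) \<ge> 2" using assms by auto
  have u0: "u > 0" unfolding u_def using n3 by simp
  have uw: "u \<le> w" unfolding u_def w_def using n3 by simp
  have w1: "w \<ge> 1"
  proof -
    have "exp 1 \<le> (3::real)" using exp_le by simp
    also have "3 \<le> real n" using n3 by simp
    finally show ?thesis unfolding w_def using n3 by (simp add: ln_ge_iff)
  qed
  have eq1: "1 / u - 1 / w = (w - u) / (u * w)" using u0 uw by (simp add: field_simps)
  have "(w - u) / (w*w) \<le> (w - u)/(u*w)"
    using u0 uw by (intro divide_left_mono mult_right_mono mult_pos_pos) auto
  thus "(ln (real n) - ln (real (n - 1))) * (1 / (ln (real n))^2)
           \<le> 1 / ln (real (n - 1)) - 1 / ln (real n)"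
    unfolding u_def[symmetric] w_def[symmetric] eq1 by (simp add: power2_eq_square)
  have "w - u \<le> 1 / real (n - 1)"
    using ln_Suc_minus_ln_le[of "n - 1"] n3 by (simp add: u_def w_def)
  also have "\<dots> \<le> 1 / real a" using assms by (intro divide_left_mono mult_pos_pos) auto
  finally have wu: "w - u \<le> 1 / real a" .
  have "(w - u) / w \<le> w - u" using w1 uw by (simp add: divide_le_eq mult_le_cancel_left1)
  hence "1 - u / w \<le> 1 / real a" using wu w1 by (simp add: diff_divide_distrib)
  moreover have "1 / u - 1 / w \<ge> 0" using u0 uw by (simp add: frac_le)
  ultimately have "(1 - 1 / real a) * (1 / u - 1 / w) \<le> (u / w) * (1 / u - 1 / w)"
    by (intro mult_right_mono) auto
  also have "(u / w) * (1 / u - 1 / w) = (w - u) * (1 / w^2)" using u0 uw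
    by (simp add: field_simps power2_eq_square)
  finally show "(1 - 1 / real a) * (1 / ln (real (n - 1)) - 1 / ln (real n))
           \<le> (ln (real n) - ln (real (n - 1))) * (1 / (ln (real n))^2)"
    unfolding u_def w_def .
qed

lemma ln_increment_div_ln_le:
  fixes n :: nat
  assumes "n \<ge> 3"
  shows "(ln (real n) - ln (real (n - 1))) * (1 / ln (real n)) \<le> ln (ln (real n)) - ln (ln (real (n - 1)))"
proof -
  define u where "u = ln (real (n - 1))"
  define w where "w = ln (real n)"
  have u0: "u > 0" unfolding u_def using assms by simp
  have uw: "u \<le> w" unfolding u_def w_def using assms by simp
  have "ln (u / w) \<le> u / w - 1" using u0 uw by (intro ln_le_minus_one) auto
  hence "ln w - ln u \<ge> 1 - u / w" using u0 uw by (simp add: ln_div)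
  moreover have "1 - u / w = (w - u) * (1 / w)" using u0 uw by (simp add: field_simps)
  ultimately show ?thesis unfolding u_def w_def by simp
qed

lemma sum_inverse_prime_ln_bounds:
  assumes a: "a \<ge> 2" and ab: "a \<le> b"
  shows "(\<Sum>p\<in>primes_between a b. 1 / (real p * ln (real p)))
           \<le> 1 / ln (real a) - 1 / ln (real b) + 12 / (ln (real a + 1))^2"
    and "(1 - 1 / real a) * (1 / ln (real a) - 1 / ln (real b)) - 12 / (ln (real a + 1))^2
           \<le> (\<Sum>p\<in>primes_between a b. 1 / (real p * ln (real p)))"
proof -
  define g where "g n = 1 / (ln (real n))^2" for n
  have "\<bar>(\<Sum>p\<in>primes_between a b. ln (real p) / real p * g p)
           - (\<Sum>n\<in>{a<..b}. (ln (real n) - ln (real (n - 1))) * g n)\<bar> \<le> 12 * g (a + 1)"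
  proof (rule partial_summation_primes[OF _ _ ab])
    fix m n assume "a < m" "m \<le> n"
    hence "ln (real m) \<le> ln (real n)" "ln (real m) > 0" using a by auto
    thus "g n \<le> g m" unfolding g_def by (intro divide_left_mono power_mono mult_pos_pos) auto
  qed (auto simp: g_def)
  moreover have "(\<Sum>p\<in>primes_between a b. ln (real p) / real p * g p)
      = (\<Sum>p\<in>primes_between a b. 1 / (real p * ln (real p)))"
    by (intro sum.cong refl)
      (auto simp: primes_between_def g_def power2_eq_square field_simps dest: prime_gt_1_nat)
  moreover have "12 * g (a + 1) = 12 / (ln (real a + 1))^2" by (simp add: g_def add.commute)
  moreover have tel: "(\<Sum>n\<in>{a<..b}. 1 / ln (real (n - 1)) - 1 / ln (real n)) = 1 / ln (real a) - 1 / ln (real b)"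
    using sum_greaterThanAtMost_telescope[OF ab, of "\<lambda>n. - 1 / ln (real n)"] by simp
  moreover have "(\<Sum>n\<in>{a<..b}. (ln (real n) - ln (real (n - 1))) * g n) \<le> 1 / ln (real a) - 1 / ln (real b)"
    unfolding tel[symmetric] g_def by (intro sum_mono ln_increment_div_ln_sq_bounds(1)) (use a in auto)
  moreover have "(1 - 1 / real a) * (1 / ln (real a) - 1 / ln (real b))
      \<le> (\<Sum>n\<in>{a<..b}. (ln (real n) - ln (real (n - 1))) * g n)"
    unfolding tel[symmetric] sum_distrib_left g_def
    by (intro sum_mono ln_increment_div_ln_sq_bounds(2)) (use a in auto)
  ultimately show "(\<Sum>p\<in>primes_between a b. 1 / (real p * ln (real p)))
           \<le> 1 / ln (real a) - 1 / ln (real b) + 12 / (ln (real a + 1))^2"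
    and "(1 - 1 / real a) * (1 / ln (real a) - 1 / ln (real b)) - 12 / (ln (real a + 1))^2
           \<le> (\<Sum>p\<in>primes_between a b. 1 / (real p * ln (real p)))"
    by linarith+
qed

lemma sum_inverse_prime_le:
  assumes a: "a \<ge> 2" and ab: "a \<le> b"
  shows "(\<Sum>p\<in>primes_between a b. 1 / real p)
           \<le> ln (ln (real b)) - ln (ln (real a)) + 12 / ln (real a + 1)"
proof -
  define g where "g n = 1 / ln (real n)" for n
  have "\<bar>(\<Sum>p\<in>primes_between a b. ln (real p) / real p * g p)
           - (\<Sum>n\<in>{a<..b}. (ln (real n) - ln (real (n - 1))) * g n)\<bar> \<le> 12 * g (a + 1)"
  proof (rule partial_summation_primes[OF _ _ ab])
    fix m n assume "a < m" "m \<le> n"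
    hence "ln (real m) \<le> ln (real n)" "ln (real m) > 0" using a by auto
    thus "g n \<le> g m" unfolding g_def by (intro divide_left_mono mult_pos_pos) auto
  qed (auto simp: g_def)
  moreover have "(\<Sum>p\<in>primes_between a b. ln (real p) / real p * g p) = (\<Sum>p\<in>primes_between a b. 1 / real p)"
    by (intro sum.cong refl) (auto simp: primes_between_def g_def field_simps dest: prime_gt_1_nat)
  moreover have "12 * g (a + 1) = 12 / ln (real a + 1)" by (simp add: g_def add.commute)
  moreover have tel: "(\<Sum>n\<in>{a<..b}. ln (ln (real n)) - ln (ln (real (n - 1)))) = ln (ln (real b)) - ln (ln (real a))"
    using sum_greaterThanAtMost_telescope[OF ab, of "\<lambda>n. ln (ln (real n))"] by simp
  moreover have "(\<Sum>n\<in>{a<..b}. (ln (real n) - ln (real (n - 1))) * g n) \<le> ln (ln (real b)) - ln (ln (real a))"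
    unfolding tel[symmetric] g_def by (intro sum_mono ln_increment_div_ln_le) (use a in auto)
  ultimately show ?thesis by linarith
qed

section \<open>Multiplicative functions supported on squarefree numbers\<close>

definition sqfree_mult :: "(nat \<Rightarrow> real) \<Rightarrow> nat \<Rightarrow> real" where
  "sqfree_mult h n = (if n = 0 then 0 else \<Prod>p\<in>prime_factors n. (if multiplicity p n = 1 then h p else 0))"

lemma multiplicity_prod_primes:
  fixes A :: "nat set"
  assumes "finite A" "\<forall>p\<in>A. prime p" "prime q"
  shows "multiplicity q (\<Prod>A) = (if q \<in> A then 1 else 0)"
  using multiplicity_prod_prime_powers[of A q "\<lambda>_. 1"] assms by simp

lemma prod_primes_pos: "finite (A::nat set) \<Longrightarrow> \<forall>p\<in>A. prime p \<Longrightarrow> \<Prod>A > (0::nat)"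
  by (metis prime_gt_0_nat prod_pos)

lemma prime_factors_prod_primes:
  fixes A :: "nat set"
  assumes "finite A" "\<forall>p\<in>A. prime p"
  shows "prime_factors (\<Prod>A) = A"
proof -
  have "\<Prod>A \<noteq> (0::nat)" using prod_primes_pos[OF assms] by simp
  thus ?thesis using multiplicity_prod_primes[OF assms] assms
    by (auto simp: prime_factors_multiplicity split: if_splits)
qed

lemma sqfree_mult_prod_primes:
  fixes A :: "nat set"
  assumes "finite A" "\<forall>p\<in>A. prime p"
  shows "sqfree_mult h (\<Prod>A) = (\<Prod>p\<in>A. h p)"
  unfolding sqfree_mult_def
  using prod_primes_pos[OF assms] prime_factors_prod_primes[OF assms] multiplicity_prod_primes[OF assms] assms(2)
  by (auto intro!: prod.cong)

lemma sqfree_mult_nonneg: "(\<And>p. h p \<ge> 0) \<Longrightarrow> sqfree_mult h n \<ge> 0"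
  unfolding sqfree_mult_def by (auto intro!: prod_nonneg)

lemma sqfree_mult_nonzero_imp:
  assumes "sqfree_mult h n \<noteq> 0"
  shows "n = \<Prod>(prime_factors n)" "\<forall>p\<in>prime_factors n. h p \<noteq> 0"
proof -
  have n0: "n \<noteq> 0" using assms by (auto simp: sqfree_mult_def split: if_splits)
  hence "(\<Prod>p\<in>prime_factors n. (if multiplicity p n = 1 then h p else 0)) \<noteq> 0"
    using assms by (simp add: sqfree_mult_def)
  hence m1: "\<forall>p\<in>prime_factors n. multiplicity p n = 1 \<and> h p \<noteq> 0"
    by (auto simp: prod_zero_iff split: if_splits)
  thus "\<forall>p\<in>prime_factors n. h p \<noteq> 0" by auto
  have "n = (\<Prod>p\<in>prime_factors n. p ^ multiplicity p n)"
    using prime_factorization_nat[of n] n0 by simp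
  also have "\<dots> = (\<Prod>p\<in>prime_factors n. p)" using m1 by (intro prod.cong) auto
  finally show "n = \<Prod>(prime_factors n)" by simp
qed

lemma sqfree_mult_nonzero_imp_Prod_Pow:
  assumes "\<And>p. h p \<noteq> 0 \<Longrightarrow> p \<in> S" "sqfree_mult h n \<noteq> 0"
  shows "n \<in> Prod ` Pow S"
  using sqfree_mult_nonzero_imp[OF assms(2)] assms(1) by (intro image_eqI[of _ _ "prime_factors n"]) auto

lemma inj_on_Prod_Pow_primes:
  fixes S :: "nat set"
  assumes "finite S" "\<forall>p\<in>S. prime p"
  shows "inj_on Prod (Pow S)"
proof (rule inj_onI)
  fix A B assume A: "A \<in> Pow S" and B: "B \<in> Pow S" and eq: "\<Prod>A = (\<Prod>B :: nat)"
  have "finite A" "\<forall>p\<in>A. prime p" "finite B" "\<forall>p\<in>B. prime p"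
    using A B assms finite_subset by auto
  thus "A = B" using eq by (metis prime_factors_prod_primes)
qed

lemma Prod_Pow_primes_ge_1:
  fixes S :: "nat set"
  assumes "finite S" "\<forall>p\<in>S. prime p" "A \<in> Pow S"
  shows "\<Prod>A \<ge> (1::nat)"
proof -
  have "finite A" "\<forall>p\<in>A. prime p" using assms by (auto intro: finite_subset)
  hence "\<Prod>A > (0::nat)" by (rule prod_primes_pos)
  thus ?thesis by simp
qed

lemma sum_supported_on_Prod_Pow:
  fixes W :: "nat \<Rightarrow> real" and S :: "nat set"
  assumes S: "finite S" "\<forall>p\<in>S. prime p"
  assumes W: "\<And>m. W m \<noteq> 0 \<Longrightarrow> m \<in> Prod ` Pow S"
  shows "(\<Sum>m\<in>{1..N}. W m) = (\<Sum>A\<in>{A\<in>Pow S. \<Prod>A \<le> N}. W (\<Prod>A))"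
proof -
  have "(\<Sum>m\<in>{1..N}. W m) = (\<Sum>m\<in>Prod ` {A\<in>Pow S. \<Prod>A \<le> N}. W m)"
  proof (rule sum.mono_neutral_right)
    show "Prod ` {A \<in> Pow S. \<Prod>A \<le> N} \<subseteq> {1..N}" using Prod_Pow_primes_ge_1[OF S] by auto
    show "\<forall>i\<in>{1..N} - Prod ` {A \<in> Pow S. \<Prod>A \<le> N}. W i = 0" using W by fastforce
  qed auto
  also have "\<dots> = (\<Sum>A\<in>{A\<in>Pow S. \<Prod>A \<le> N}. W (\<Prod>A))"
    by (rule sum.reindex_cong[OF inj_on_subset[OF inj_on_Prod_Pow_primes[OF S]]]) auto
  finally show ?thesis .
qed

lemma infsum_supported_on_Prod_Pow:
  fixes W :: "nat \<Rightarrow> real" and S :: "nat set"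
  assumes S: "finite S" "\<forall>p\<in>S. prime p"
  assumes W: "\<And>m. W m \<noteq> 0 \<Longrightarrow> m \<in> Prod ` Pow S"
  shows "infsum W {d. d \<ge> 1 \<and> P d} = (\<Sum>A\<in>{A\<in>Pow S. P (\<Prod>A)}. W (\<Prod>A))"
proof -
  have "infsum W {d. d \<ge> 1 \<and> P d} = infsum W (Prod ` {A\<in>Pow S. P (\<Prod>A)})"
    using W Prod_Pow_primes_ge_1[OF S] by (intro infsum_cong_neutral) fastforce+
  also have "\<dots> = (\<Sum>m\<in>Prod ` {A\<in>Pow S. P (\<Prod>A)}. W m)" using S by simp
  also have "\<dots> = (\<Sum>A\<in>{A\<in>Pow S. P (\<Prod>A)}. W (\<Prod>A))"
    by (rule sum.reindex_cong[OF inj_on_subset[OF inj_on_Prod_Pow_primes[OF S]]]) auto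
  finally show ?thesis .
qed

lemma sum_Pow_prod_eq_prod_1_plus:
  fixes g :: "nat \<Rightarrow> real"
  assumes "finite S"
  shows "(\<Sum>A\<in>Pow S. \<Prod>p\<in>A. g p) = (\<Prod>p\<in>S. 1 + g p)"
  using prod_add[OF assms, of g "\<lambda>_. 1"] by (simp add: add.commute)

lemma coprime_prod_primes_iff:
  fixes C D :: "nat set"
  assumes "finite C" "\<forall>p\<in>C. prime p" "finite D" "\<forall>p\<in>D. prime p"
  shows "coprime (\<Prod>C) (\<Prod>D) \<longleftrightarrow> C \<inter> D = {}"
proof
  assume cop: "coprime (\<Prod>C) (\<Prod>D)"
  show "C \<inter> D = {}"
  proof (rule ccontr)
    assume "C \<inter> D \<noteq> {}"
    then obtain p where p: "p \<in> C" "p \<in> D" by auto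
    hence "p dvd \<Prod>C" "p dvd \<Prod>D" using assms by (auto intro: dvd_prodI)
    hence "is_unit p" using cop by (metis coprime_common_divisor)
    thus False using p assms by (auto simp: not_prime_unit)
  qed
next
  assume "C \<inter> D = {}"
  thus "coprime (\<Prod>C) (\<Prod>D)"
    using assms by (intro prod_coprime_left prod_coprime_right primes_coprime) auto
qed

definition prime_window :: "real \<Rightarrow> nat set" where
  "prime_window x = {p. prime p \<and> lam x ^ 2 \<le> real p \<and> real p \<le> exp ((ln (lam x))^2)}"

lemma finite_prime_window [simp]: "finite (prime_window x)"
  by (rule finite_subset[of _ "{..nat \<lceil>exp ((ln (lam x))^2)\<rceil>}"])
     (auto simp: prime_window_def le_nat_iff le_ceiling_iff)

lemma prime_window_primes: "\<forall>p\<in>prime_window x. prime p"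
  by (simp add: prime_window_def)

lemma subset_prime_window_imp:
  assumes "A \<subseteq> prime_window x"
  shows "finite A" "\<forall>p\<in>A. prime p"
  using assms finite_subset[OF assms finite_prime_window] prime_window_primes[of x] by auto

lemma r_prime_nonzero_imp: "r_prime x p \<noteq> 0 \<Longrightarrow> p \<in> prime_window x"
  by (auto simp: r_prime_def prime_window_def split: if_splits)

lemma r_prime_nonneg: "lam x \<ge> 0 \<Longrightarrow> r_prime x p \<ge> 0"
  by (auto simp: r_prime_def dest: prime_gt_0_nat intro!: divide_nonneg_nonneg mult_nonneg_nonneg)

lemma r_eq_sqfree_mult: "r x n = sqfree_mult (r_prime x) n"
  unfolding r_def sqfree_mult_def r_pp_def by simp

lemma r_nonzero_imp: "r x m \<noteq> 0 \<Longrightarrow> m \<in> Prod ` Pow (prime_window x)"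
  unfolding r_eq_sqfree_mult by (rule sqfree_mult_nonzero_imp_Prod_Pow[OF r_prime_nonzero_imp])

lemma r_prime_power:
  assumes "prime p" "k \<ge> 1"
  shows "r x (p ^ k) = (if k = 1 then r_prime x p else 0)"
proof -
  have pf: "prime_factors (p ^ k) = {p}"
    using assms by (simp add: prime_factorization_prime_power)
  have "p ^ k \<noteq> 0" using assms prime_gt_0_nat by simp
  thus ?thesis unfolding r_def r_pp_def pf using assms by simp
qed

definition t_prime :: "real \<Rightarrow> nat \<Rightarrow> real" where
  "t_prime x p = r_prime x p / (1 + (r_prime x p)^2)"

lemma t_prime_nonzero_imp: "t_prime x p \<noteq> 0 \<Longrightarrow> p \<in> prime_window x"
  by (auto simp: t_prime_def intro: r_prime_nonzero_imp)

lemma t_prime_nonneg: "lam x \<ge> 0 \<Longrightarrow> t_prime x p \<ge> 0"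
  using r_prime_nonneg[of x p] by (auto simp: t_prime_def intro!: divide_nonneg_pos add_pos_nonneg)

lemma t_prime_le_r_prime: "lam x \<ge> 0 \<Longrightarrow> t_prime x p \<le> r_prime x p"
  unfolding t_prime_def using r_prime_nonneg[of x p]
  by (simp add: divide_le_eq mult_le_cancel_left1 add_pos_nonneg)

lemma t_eq_sqfree_mult: "t x n = sqfree_mult (t_prime x) n"
proof (cases "n = 0")
  case False
  have "t_pp x p (multiplicity p n) = (if multiplicity p n = 1 then t_prime x p else 0)"
    if "p \<in> prime_factors n" for p
  proof -
    have "multiplicity p n \<ge> 1" using that False by (simp add: prime_factors_multiplicity)
    thus ?thesis unfolding t_pp_def using r_prime_power[of p] that
      by (simp add: t_prime_def in_prime_factors_imp_prime)
  qed
  thus ?thesis unfolding t_def sqfree_mult_def using False by (auto intro!: prod.cong)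
qed (simp add: t_def sqfree_mult_def)

lemma t_at_prime: "prime p \<Longrightarrow> t x p = t_prime x p"
  using sqfree_mult_prod_primes[of "{p}" "t_prime x"] by (simp add: t_eq_sqfree_mult)

lemma sqrt_of_nat_Prod: "sqrt (real (\<Prod>A)) = (\<Prod>p\<in>A. sqrt (real p))"
  by (induction A rule: infinite_finite_induct) (simp_all add: real_sqrt_mult)

lemma of_nat_Prod_powr: "real (\<Prod>A) powr e = (\<Prod>p\<in>A. real p powr e)"
  by (simp add: prod_powr_distrib)

definition t_weight :: "real \<Rightarrow> nat \<Rightarrow> real" where
  "t_weight x p = t_prime x p / sqrt (real p)"

lemma t_weight_nonneg: "lam x \<ge> 0 \<Longrightarrow> t_weight x p \<ge> 0"
  using t_prime_nonneg[of x p] by (simp add: t_weight_def)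

definition euler_prod :: "real \<Rightarrow> real" where
  "euler_prod x = (\<Prod>p\<in>prime_window x. 1 + t_weight x p)"

lemma sum_t_div_sqrt_eq:
  "(\<Sum>m\<in>{1..N}. t x m / sqrt (real m))
     = (\<Sum>A\<in>{A\<in>Pow (prime_window x). \<Prod>A \<le> N}. \<Prod>p\<in>A. t_weight x p)"
proof -
  have "(\<Sum>m\<in>{1..N}. t x m / sqrt (real m))
      = (\<Sum>A\<in>{A\<in>Pow (prime_window x). \<Prod>A \<le> N}. t x (\<Prod>A) / sqrt (real (\<Prod>A)))"
  proof (rule sum_supported_on_Prod_Pow[OF finite_prime_window prime_window_primes])
    fix m assume "t x m / sqrt (real m) \<noteq> 0"
    thus "m \<in> Prod ` Pow (prime_window x)"
      unfolding t_eq_sqfree_mult by (intro sqfree_mult_nonzero_imp_Prod_Pow[OF t_prime_nonzero_imp]) auto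
  qed
  also have "\<dots> = (\<Sum>A\<in>{A\<in>Pow (prime_window x). \<Prod>A \<le> N}. \<Prod>p\<in>A. t_weight x p)"
  proof (intro sum.cong refl)
    fix A assume "A \<in> {A\<in>Pow (prime_window x). \<Prod>A \<le> N}"
    hence A: "finite A" "\<forall>p\<in>A. prime p" using subset_prime_window_imp by auto
    show "t x (\<Prod>A) / sqrt (real (\<Prod>A)) = (\<Prod>p\<in>A. t_weight x p)"
      unfolding t_eq_sqfree_mult sqfree_mult_prod_primes[OF A] sqrt_of_nat_Prod t_weight_def
      by (simp add: prod_dividef)
  qed
  finally show ?thesis .
qed

lemma sum_t_div_sqrt_le_euler_prod:
  assumes "lam x \<ge> 0"
  shows "(\<Sum>m\<in>{1..N}. t x m / sqrt (real m)) \<le> euler_prod x"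
proof -
  have "(\<Sum>m\<in>{1..N}. t x m / sqrt (real m)) \<le> (\<Sum>A\<in>Pow (prime_window x). \<Prod>p\<in>A. t_weight x p)"
    unfolding sum_t_div_sqrt_eq using t_weight_nonneg[OF assms] by (intro sum_mono2 prod_nonneg) auto
  thus ?thesis unfolding euler_prod_def by (simp add: sum_Pow_prod_eq_prod_1_plus)
qed

lemma euler_prod_ge_1: "lam x \<ge> 0 \<Longrightarrow> euler_prod x \<ge> 1"
  unfolding euler_prod_def using t_weight_nonneg by (intro prod_ge_1) auto

lemma prod_primes_t_eq_euler_prod:
  "(\<Prod>p\<in>{p. prime p \<and> real p \<le> exp ((ln (lam x))^2)}. (1 + t x p / sqrt (real p))) = euler_prod x"
proof -
  have fin: "finite {p. prime p \<and> real p \<le> exp ((ln (lam x))^2)}"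
    by (rule finite_subset[of _ "{..nat \<lceil>exp ((ln (lam x))^2)\<rceil>}"])
       (auto simp: le_nat_iff le_ceiling_iff)
  have "(\<Prod>p\<in>{p. prime p \<and> real p \<le> exp ((ln (lam x))^2)}. (1 + t x p / sqrt (real p)))
      = (\<Prod>p\<in>{p. prime p \<and> real p \<le> exp ((ln (lam x))^2)}. 1 + t_weight x p)"
    by (intro prod.cong refl) (simp add: t_at_prime t_weight_def)
  also have "\<dots> = euler_prod x"
    unfolding euler_prod_def using t_prime_nonzero_imp
    by (intro prod.mono_neutral_right[OF fin]) (auto simp: prime_window_def t_weight_def)
  finally show ?thesis .
qed

definition large_lam :: "real \<Rightarrow> bool" where
  "large_lam x \<longleftrightarrow> lam x > 0 \<and> ln (lam x) \<ge> 3 \<and> exp ((ln (lam x))^2) \<ge> (lam x)^2 + 2"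

lemma eventually_large_lam: "eventually large_lam at_top"
proof -
  have "eventually (\<lambda>x. lam x > 0) at_top" "eventually (\<lambda>x. ln (lam x) \<ge> 3) at_top"
    "eventually (\<lambda>x. exp ((ln (lam x))^2) \<ge> (lam x)^2 + 2) at_top"
    unfolding lam_def by real_asymp+
  thus ?thesis unfolding large_lam_def by eventually_elim auto
qed

lemma large_lam_imp:
  assumes "large_lam x"
  shows "lam x > 0" "ln (lam x) \<ge> 3" "lam x \<ge> 4" "(lam x)^2 \<ge> 16"
    "exp ((ln (lam x))^2) \<ge> (lam x)^2 + 2"
proof -
  show l: "lam x > 0" "ln (lam x) \<ge> 3" "exp ((ln (lam x))^2) \<ge> (lam x)^2 + 2"
    using assms by (auto simp: large_lam_def)
  have "exp 3 \<le> lam x" using l by (simp add: ln_ge_iff)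
  moreover have "4 \<le> exp (3::real)" using exp_ge_add_one_self[of 3] by simp
  ultimately show "lam x \<ge> 4" by simp
  hence "4 * 4 \<le> lam x * lam x" by (intro mult_mono) auto
  thus "(lam x)^2 \<ge> 16" by (simp add: power2_eq_square)
qed

definition window_lo :: "real \<Rightarrow> nat" where "window_lo x = nat \<lceil>(lam x)^2\<rceil> - 1"
definition window_hi :: "real \<Rightarrow> nat" where "window_hi x = nat \<lfloor>exp ((ln (lam x))^2)\<rfloor>"

lemma window_lo_hi_bounds:
  assumes "large_lam x"
  shows "real (window_lo x) \<ge> (lam x)^2 - 1" "real (window_lo x) \<le> (lam x)^2" "window_lo x \<ge> 2"
        "real (window_hi x) \<le> exp ((ln (lam x))^2)" "real (window_hi x) \<ge> exp ((ln (lam x))^2) - 1"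
        "window_lo x \<le> window_hi x"
proof -
  note l = large_lam_imp[OF assms]
  have c1: "\<lceil>(lam x)^2\<rceil> \<ge> 1" using l by linarith
  have n1: "nat \<lceil>(lam x)^2\<rceil> \<ge> 1" using c1 by linarith
  have "real (window_lo x) = real_of_int \<lceil>(lam x)^2\<rceil> - 1"
    unfolding window_lo_def using c1 by (subst of_nat_diff[OF n1]) auto
  thus lo: "real (window_lo x) \<ge> (lam x)^2 - 1" "real (window_lo x) \<le> (lam x)^2"
    by linarith+
  thus "window_lo x \<ge> 2" using l by linarith
  have "real (window_hi x) = real_of_int \<lfloor>exp ((ln (lam x))^2)\<rfloor>" unfolding window_hi_def by simp
  thus hi: "real (window_hi x) \<le> exp ((ln (lam x))^2)" "real (window_hi x) \<ge> exp ((ln (lam x))^2) - 1"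
    by linarith+
  have "real (window_lo x) \<le> real (window_hi x)" using lo hi l by linarith
  thus "window_lo x \<le> window_hi x" by simp
qed

lemma prime_window_eq_primes_between:
  assumes "large_lam x"
  shows "prime_window x = primes_between (window_lo x) (window_hi x)"
proof -
  have c1: "\<lceil>(lam x)^2\<rceil> \<ge> 1" using large_lam_imp[OF assms] by linarith
  have "window_lo x < p \<longleftrightarrow> (lam x)^2 \<le> real p" for p
  proof -
    have "window_lo x < p \<longleftrightarrow> \<lceil>(lam x)^2\<rceil> \<le> int p" unfolding window_lo_def using c1 by linarith
    also have "\<dots> \<longleftrightarrow> (lam x)^2 \<le> real p" by (simp add: ceiling_le_iff)
    finally show ?thesis .
  qed
  moreover have "p \<le> window_hi x \<longleftrightarrow> real p \<le> exp ((ln (lam x))^2)" for p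
  proof -
    have "exp ((ln (lam x))^2) \<ge> 0" by simp
    hence "p \<le> window_hi x \<longleftrightarrow> int p \<le> \<lfloor>exp ((ln (lam x))^2)\<rfloor>" unfolding window_hi_def by linarith
    also have "\<dots> \<longleftrightarrow> real p \<le> exp ((ln (lam x))^2)" by (simp add: le_floor_iff)
    finally show ?thesis .
  qed
  ultimately show ?thesis unfolding prime_window_def primes_between_def by auto
qed

definition inv_p_ln_p_upper :: "real \<Rightarrow> real" where
  "inv_p_ln_p_upper x = 1 / ln ((lam x)^2 - 1) - 1 / (ln (lam x))^2 + 12 / (ln ((lam x)^2))^2"

definition inv_p_ln_p_lower :: "real \<Rightarrow> real" where
  "inv_p_ln_p_lower x = (1 - 1 / ((lam x)^2 - 1)) * (1 / ln ((lam x)^2) - 1 / ln (exp ((ln (lam x))^2) - 1))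
     - 12 / (ln ((lam x)^2))^2"

definition inv_p_upper :: "real \<Rightarrow> real" where
  "inv_p_upper x = ln ((ln (lam x))^2) - ln (ln ((lam x)^2 - 1)) + 12 / ln ((lam x)^2)"

lemma ln_window_lo_plus_1_ge:
  assumes "large_lam x"
  shows "ln ((lam x)^2) \<le> ln (real (window_lo x) + 1)" "ln ((lam x)^2) > 0"
  using window_lo_hi_bounds[OF assms] large_lam_imp[OF assms] by (auto intro: ln_mono)

lemma sum_window_inv_p_ln_p_le:
  assumes "large_lam x"
  shows "(\<Sum>p\<in>prime_window x. 1 / (real p * ln (real p))) \<le> inv_p_ln_p_upper x"
proof -
  note l = large_lam_imp[OF assms] and w = window_lo_hi_bounds[OF assms]
    and lo1 = ln_window_lo_plus_1_ge[OF assms]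
  have "1 / ln (real (window_lo x)) \<le> 1 / ln ((lam x)^2 - 1)"
    using w l by (intro divide_left_mono ln_mono mult_pos_pos) auto
  moreover have "1 / (ln (lam x))^2 \<le> 1 / ln (real (window_hi x))"
  proof -
    have "ln (real (window_hi x)) \<le> ln (exp ((ln (lam x))^2))" using w by (intro ln_mono) auto
    moreover have "ln (real (window_hi x)) > 0" using w by simp
    ultimately show ?thesis by (simp add: frac_le)
  qed
  moreover have "12 / (ln (real (window_lo x) + 1))^2 \<le> 12 / (ln ((lam x)^2))^2"
    using lo1 w by (intro divide_left_mono power_mono mult_pos_pos) auto
  ultimately show ?thesis
    using sum_inverse_prime_ln_bounds(1)[OF w(3) w(6)]
    unfolding prime_window_eq_primes_between[OF assms] inv_p_ln_p_upper_def by linarith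
qed

lemma sum_window_inv_p_ln_p_ge:
  assumes "large_lam x"
  shows "(\<Sum>p\<in>prime_window x. 1 / (real p * ln (real p))) \<ge> inv_p_ln_p_lower x"
proof -
  note l = large_lam_imp[OF assms] and w = window_lo_hi_bounds[OF assms]
    and lo1 = ln_window_lo_plus_1_ge[OF assms]
  define X where "X = 1 / ln (real (window_lo x)) - 1 / ln (real (window_hi x))"
  define X' where "X' = 1 / ln ((lam x)^2) - 1 / ln (exp ((ln (lam x))^2) - 1)"
  have X0: "X \<ge> 0" unfolding X_def using w by (simp add: frac_le)
  have "1 / ln ((lam x)^2) \<le> 1 / ln (real (window_lo x))"
    using w l by (intro divide_left_mono ln_mono mult_pos_pos) auto
  moreover have "1 / ln (real (window_hi x)) \<le> 1 / ln (exp ((ln (lam x))^2) - 1)"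
  proof -
    have Y2: "exp ((ln (lam x))^2) - 1 > 1" using l by linarith
    hence "ln (exp ((ln (lam x))^2) - 1) > 0" by (rule ln_gt_zero)
    thus ?thesis using w Y2 by (intro divide_left_mono ln_mono mult_pos_pos) auto
  qed
  ultimately have XX: "X' \<le> X" unfolding X_def X'_def by linarith
  have f1: "0 \<le> 1 - 1 / ((lam x)^2 - 1)" using l by simp
  have f2: "1 - 1 / ((lam x)^2 - 1) \<le> 1 - 1 / real (window_lo x)"
    using w l by (simp add: frac_le)
  have "(1 - 1 / ((lam x)^2 - 1)) * X' \<le> (1 - 1 / ((lam x)^2 - 1)) * X"
    by (rule mult_left_mono[OF XX f1])
  also have "\<dots> \<le> (1 - 1 / real (window_lo x)) * X" using f2 X0 by (rule mult_right_mono)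
  finally have "(1 - 1 / ((lam x)^2 - 1)) * X' \<le> (1 - 1 / real (window_lo x)) * X" .
  moreover have "12 / (ln (real (window_lo x) + 1))^2 \<le> 12 / (ln ((lam x)^2))^2"
    using lo1 w by (intro divide_left_mono power_mono mult_pos_pos) auto
  ultimately show ?thesis
    using sum_inverse_prime_ln_bounds(2)[OF w(3) w(6)]
    unfolding prime_window_eq_primes_between[OF assms] inv_p_ln_p_lower_def X_def X'_def by linarith
qed

lemma sum_window_inv_p_le:
  assumes "large_lam x"
  shows "(\<Sum>p\<in>prime_window x. 1 / real p) \<le> inv_p_upper x"
proof -
  note l = large_lam_imp[OF assms] and w = window_lo_hi_bounds[OF assms]
    and lo1 = ln_window_lo_plus_1_ge[OF assms]
  have "ln (ln (real (window_hi x))) \<le> ln ((ln (lam x))^2)"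
  proof -
    have "ln (real (window_hi x)) \<le> ln (exp ((ln (lam x))^2))" using w by (intro ln_mono) auto
    moreover have "ln (real (window_hi x)) > 0" using w by simp
    ultimately show ?thesis by (intro ln_mono) auto
  qed
  moreover have "ln (ln ((lam x)^2 - 1)) \<le> ln (ln (real (window_lo x)))"
  proof -
    have "ln ((lam x)^2 - 1) \<le> ln (real (window_lo x))" using w l by (intro ln_mono) auto
    moreover have "ln ((lam x)^2 - 1) > 0" using l by simp
    ultimately show ?thesis using w l by (intro ln_mono) auto
  qed
  moreover have "12 / ln (real (window_lo x) + 1) \<le> 12 / ln ((lam x)^2)"
    using lo1 w by (intro divide_left_mono mult_pos_pos) auto
  ultimately show ?thesis
    using sum_inverse_prime_le[OF w(3) w(6)]
    unfolding prime_window_eq_primes_between[OF assms] inv_p_upper_def by linarith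
qed

lemma prime_window_bounds:
  assumes "large_lam x" "p \<in> prime_window x"
  shows "real p \<ge> 2" "ln (real p) > 0" "sqrt (real p) \<ge> lam x"
    "ln (real p) \<ge> 2 * ln (lam x)" "ln (real p) \<le> (ln (lam x))^2"
proof -
  note l = large_lam_imp[OF assms(1)]
  have p: "prime p" "(lam x)^2 \<le> real p" "real p \<le> exp ((ln (lam x))^2)"
    using assms by (auto simp: prime_window_def)
  show p2: "real p \<ge> 2" using prime_ge_2_nat[OF p(1)] by simp
  thus "ln (real p) > 0" by simp
  have "sqrt ((lam x)^2) \<le> sqrt (real p)" using p by (intro real_sqrt_le_mono)
  thus "sqrt (real p) \<ge> lam x" using l by simp
  have "ln ((lam x)^2) \<le> ln (real p)" using p l by (intro ln_mono) auto
  thus "ln (real p) \<ge> 2 * ln (lam x)" using l by (simp add: ln_realpow)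
  have "ln (real p) \<le> ln (exp ((ln (lam x))^2))" using p p2 by (intro ln_mono) auto
  thus "ln (real p) \<le> (ln (lam x))^2" by simp
qed

lemma r_prime_in_window:
  assumes "large_lam x" "p \<in> prime_window x"
  shows "r_prime x p / sqrt (real p) = lam x / (real p * ln (real p))"
    "(r_prime x p)^2 = (lam x)^2 / (real p * (ln (real p))^2)"
    "0 \<le> r_prime x p" "r_prime x p \<le> 1 / (2 * ln (lam x))"
proof -
  note l = large_lam_imp[OF assms(1)] and b = prime_window_bounds[OF assms]
  have r: "r_prime x p = lam x / (sqrt (real p) * ln (real p))"
    using assms(2) by (simp add: r_prime_def prime_window_def)
  show "r_prime x p / sqrt (real p) = lam x / (real p * ln (real p))"
    unfolding r using b by (simp add: field_simps)
  show "(r_prime x p)^2 = (lam x)^2 / (real p * (ln (real p))^2)"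
    unfolding r using b by (simp add: power_divide power_mult_distrib)
  show "0 \<le> r_prime x p" using r_prime_nonneg[of x p] l by simp
  have "lam x / (sqrt (real p) * ln (real p)) \<le> lam x / (lam x * (2 * ln (lam x)))"
    using l b by (intro divide_left_mono mult_mono mult_pos_pos) auto
  thus "r_prime x p \<le> 1 / (2 * ln (lam x))" unfolding r using l by simp
qed

lemma t_weight_le:
  assumes "large_lam x" "p \<in> prime_window x"
  shows "t_weight x p \<le> lam x / (real p * ln (real p))"
proof -
  have "t_weight x p \<le> r_prime x p / sqrt (real p)"
    unfolding t_weight_def using t_prime_le_r_prime[of x p] large_lam_imp[OF assms(1)]
    by (intro divide_right_mono) auto
  thus ?thesis using r_prime_in_window(1)[OF assms] by simp
qed

section \<open>The truncated sum of \<open>t(m)/\<surd>m\<close>\<close>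

lemma rankin_tail_bound:
  fixes S :: "nat set" and g :: "nat \<Rightarrow> real"
  assumes S: "finite S" "\<forall>p\<in>S. prime p" and g: "\<forall>p\<in>S. g p \<ge> 0" and b: "\<beta> \<ge> 0" and N: "N \<ge> 1"
  shows "(\<Sum>A\<in>Pow S. \<Prod>p\<in>A. g p) - (\<Sum>A\<in>{A\<in>Pow S. \<Prod>A \<le> N}. \<Prod>p\<in>A. g p)
           \<le> real N powr (-\<beta>) * (\<Prod>p\<in>S. 1 + g p * real p powr \<beta>)"
proof -
  have fin: "finite (Pow S)" using S by simp
  have "(\<Sum>A\<in>Pow S. \<Prod>p\<in>A. g p) - (\<Sum>A\<in>{A\<in>Pow S. \<Prod>A \<le> N}. \<Prod>p\<in>A. g p)
      = (\<Sum>A\<in>Pow S - {A\<in>Pow S. \<Prod>A \<le> N}. \<Prod>p\<in>A. g p)"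
    by (rule sum_diff[symmetric]) (use fin in auto)
  also have "\<dots> \<le> (\<Sum>A\<in>Pow S - {A\<in>Pow S. \<Prod>A \<le> N}. real N powr (-\<beta>) * (\<Prod>p\<in>A. g p * real p powr \<beta>))"
  proof (intro sum_mono)
    fix A assume A: "A \<in> Pow S - {A\<in>Pow S. \<Prod>A \<le> N}"
    hence "(\<Prod>p\<in>A. g p) \<ge> 0" using g by (intro prod_nonneg) auto
    moreover have "1 \<le> (real (\<Prod>A) / real N) powr \<beta>"
      using A N b by (intro ge_one_powr_ge_zero) (auto simp: field_simps simp del: of_nat_prod)
    ultimately have "(\<Prod>p\<in>A. g p) \<le> (real (\<Prod>A) / real N) powr \<beta> * (\<Prod>p\<in>A. g p)"
      by (simp add: mult_le_cancel_right1)
    also have "(real (\<Prod>A) / real N) powr \<beta> = real N powr (-\<beta>) * (\<Prod>p\<in>A. real p powr \<beta>)"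
      using N by (simp add: powr_divide powr_minus_divide of_nat_Prod_powr del: of_nat_prod)
    finally show "(\<Prod>p\<in>A. g p) \<le> real N powr (-\<beta>) * (\<Prod>p\<in>A. g p * real p powr \<beta>)"
      by (simp add: prod.distrib mult_ac)
  qed
  also have "\<dots> \<le> (\<Sum>A\<in>Pow S. real N powr (-\<beta>) * (\<Prod>p\<in>A. g p * real p powr \<beta>))"
    using fin g by (intro sum_mono2 mult_nonneg_nonneg prod_nonneg) auto
  also have "\<dots> = real N powr (-\<beta>) * (\<Prod>p\<in>S. 1 + g p * real p powr \<beta>)"
    by (simp add: sum_distrib_left[symmetric] sum_Pow_prod_eq_prod_1_plus[OF S(1)])
  finally show ?thesis .
qed

lemma prod_one_plus_le_exp_sum_diff:
  fixes S :: "nat set" and c d :: "nat \<Rightarrow> real"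
  assumes "finite S" "\<forall>p\<in>S. 0 \<le> d p \<and> d p \<le> c p"
  shows "(\<Prod>p\<in>S. 1 + c p) \<le> (\<Prod>p\<in>S. 1 + d p) * exp (\<Sum>p\<in>S. c p - d p)"
proof -
  have "1 + c p \<le> (1 + d p) * exp (c p - d p)" if "p \<in> S" for p
  proof -
    have "d p * d p \<le> c p * d p" using assms that by (intro mult_right_mono) auto
    hence "1 + c p \<le> (1 + d p) * (1 + (c p - d p))" by (simp add: algebra_simps)
    also have "\<dots> \<le> (1 + d p) * exp (c p - d p)"
      using assms that by (intro mult_left_mono) (auto simp: exp_ge_add_one_self add.commute)
    finally show ?thesis .
  qed
  hence "(\<Prod>p\<in>S. 1 + c p) \<le> (\<Prod>p\<in>S. (1 + d p) * exp (c p - d p))"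
    using assms by (intro prod_mono) auto
  also have "\<dots> = (\<Prod>p\<in>S. 1 + d p) * exp (\<Sum>p\<in>S. c p - d p)"
    using assms by (simp add: prod.distrib exp_sum)
  finally show ?thesis .
qed

lemma exp_minus_1_le_mult_exp: "0 \<le> (y::real) \<Longrightarrow> exp y - 1 \<le> y * exp y"
proof -
  assume "0 \<le> y"
  have "1 - y \<le> exp (- y)" using exp_ge_add_one_self[of "-y"] by simp
  hence "(1 - y) * exp y \<le> exp (-y) * exp y" by (intro mult_right_mono) auto
  thus ?thesis by (simp add: exp_minus algebra_simps)
qed

definition rankin_exponent :: "real \<Rightarrow> real" where
  "rankin_exponent x = 1 / (ln (lam x))^3"

lemma rankin_exponent_nonneg: "large_lam x \<Longrightarrow> rankin_exponent x \<ge> 0"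
  unfolding rankin_exponent_def using large_lam_imp(2)[of x] by simp

lemma rankin_exponent_bounds:
  assumes "large_lam x" "p \<in> prime_window x"
  shows "rankin_exponent x * ln (real p) \<ge> 0"
    "rankin_exponent x * ln (real p) \<le> 1 / ln (lam x)" "1 / ln (lam x) \<le> 1"
    "real p powr rankin_exponent x = exp (rankin_exponent x * ln (real p))"
    "real p powr rankin_exponent x \<ge> 1"
proof -
  note l = large_lam_imp[OF assms(1)] and b = prime_window_bounds[OF assms]
  have a0: "rankin_exponent x \<ge> 0" using rankin_exponent_nonneg[OF assms(1)] .
  show "rankin_exponent x * ln (real p) \<ge> 0" using a0 b by simp
  have "rankin_exponent x * ln (real p) \<le> rankin_exponent x * (ln (lam x))^2"
    using b a0 by (intro mult_left_mono) auto
  also have "\<dots> = 1 / ln (lam x)"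
    unfolding rankin_exponent_def using l by (simp add: power2_eq_square power3_eq_cube)
  finally show "rankin_exponent x * ln (real p) \<le> 1 / ln (lam x)" .
  show "1 / ln (lam x) \<le> 1" using l by simp
  show "real p powr rankin_exponent x = exp (rankin_exponent x * ln (real p))"
    using b by (simp add: powr_def mult.commute)
  show "real p powr rankin_exponent x \<ge> 1" using b a0 by (intro ge_one_powr_ge_zero) auto
qed

lemma t_weight_powr_increment_le:
  assumes "large_lam x" "p \<in> prime_window x"
  shows "t_weight x p * real p powr rankin_exponent x - t_weight x p
           \<le> lam x * rankin_exponent x * exp (1 / ln (lam x)) * (1 / real p)"
proof -
  note rb = rankin_exponent_bounds[OF assms] and b = prime_window_bounds[OF assms]
  define y where "y = rankin_exponent x * ln (real p)"
  have "real p powr rankin_exponent x - 1 \<le> y * exp y"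
    unfolding rb(4) y_def by (rule exp_minus_1_le_mult_exp[OF rb(1)])
  also have "\<dots> \<le> y * exp (1 / ln (lam x))" using rb unfolding y_def by (intro mult_left_mono) auto
  finally have e: "real p powr rankin_exponent x - 1 \<le> y * exp (1 / ln (lam x))" .
  have "t_weight x p * real p powr rankin_exponent x - t_weight x p
      = t_weight x p * (real p powr rankin_exponent x - 1)" by (simp add: algebra_simps)
  also have "\<dots> \<le> (lam x / (real p * ln (real p))) * (y * exp (1 / ln (lam x)))"
    using t_weight_le[OF assms] t_weight_nonneg[of x p] large_lam_imp[OF assms(1)] e rb(5)
    by (intro mult_mono) auto
  also have "\<dots> = lam x * rankin_exponent x * exp (1 / ln (lam x)) * (1 / real p)"
    using b unfolding y_def by (simp add: field_simps)
  finally show ?thesis .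
qed

lemma prod_t_weight_powr_le:
  assumes "large_lam x"
  shows "(\<Prod>p\<in>prime_window x. 1 + t_weight x p * real p powr rankin_exponent x)
           \<le> euler_prod x * exp (lam x * rankin_exponent x * exp (1 / ln (lam x)) * inv_p_upper x)"
proof -
  note l = large_lam_imp[OF assms]
  define c where "c = lam x * rankin_exponent x * exp (1 / ln (lam x))"
  have "(\<Prod>p\<in>prime_window x. 1 + t_weight x p * real p powr rankin_exponent x)
      \<le> euler_prod x * exp (\<Sum>p\<in>prime_window x. t_weight x p * real p powr rankin_exponent x - t_weight x p)"
    unfolding euler_prod_def
  proof (intro prod_one_plus_le_exp_sum_diff ballI conjI)
    fix p assume "p \<in> prime_window x"
    show "0 \<le> t_weight x p" using t_weight_nonneg[of x p] l by simp
    thus "t_weight x p \<le> t_weight x p * real p powr rankin_exponent x"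
      using rankin_exponent_bounds(5)[OF assms \<open>p \<in> prime_window x\<close>] mult_left_mono[of 1] by fastforce
  qed simp
  also have "(\<Sum>p\<in>prime_window x. t_weight x p * real p powr rankin_exponent x - t_weight x p)
      \<le> (\<Sum>p\<in>prime_window x. c * (1 / real p))"
    unfolding c_def by (intro sum_mono t_weight_powr_increment_le[OF assms])
  also have "\<dots> \<le> c * inv_p_upper x"
    unfolding sum_distrib_left[symmetric] c_def using sum_window_inv_p_le[OF assms] l
      rankin_exponent_nonneg[OF assms] by (intro mult_left_mono) auto
  finally show ?thesis
    unfolding c_def using euler_prod_ge_1[of x] l by (simp add: mult_left_mono)
qed

lemma euler_prod_minus_sum_t_div_sqrt_le:
  assumes x: "large_lam x" and N: "N \<ge> 1"
  shows "euler_prod x - (\<Sum>m\<in>{1..N}. t x m / sqrt (real m))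
          \<le> euler_prod x * exp (- rankin_exponent x * ln (real N)
               + lam x * rankin_exponent x * exp (1 / ln (lam x)) * inv_p_upper x)"
proof -
  note l = large_lam_imp[OF x]
  define \<beta> where "\<beta> = rankin_exponent x"
  have "euler_prod x - (\<Sum>m\<in>{1..N}. t x m / sqrt (real m))
      = (\<Sum>A\<in>Pow (prime_window x). \<Prod>p\<in>A. t_weight x p)
        - (\<Sum>A\<in>{A\<in>Pow (prime_window x). \<Prod>A \<le> N}. \<Prod>p\<in>A. t_weight x p)"
    unfolding euler_prod_def sum_t_div_sqrt_eq by (simp add: sum_Pow_prod_eq_prod_1_plus)
  also have "\<dots> \<le> real N powr (-\<beta>) * (\<Prod>p\<in>prime_window x. 1 + t_weight x p * real p powr \<beta>)"
    using t_weight_nonneg l N rankin_exponent_nonneg[OF x] unfolding \<beta>_def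
    by (intro rankin_tail_bound) (auto simp: prime_window_primes)
  also have "\<dots> \<le> real N powr (-\<beta>) * (euler_prod x * exp (lam x * \<beta> * exp (1 / ln (lam x)) * inv_p_upper x))"
    unfolding \<beta>_def by (intro mult_left_mono prod_t_weight_powr_le[OF x]) simp
  also have "\<dots> = euler_prod x * exp (- \<beta> * ln (real N) + lam x * \<beta> * exp (1 / ln (lam x)) * inv_p_upper x)"
    using N by (simp add: powr_def exp_add[symmetric])
  finally show ?thesis unfolding \<beta>_def .
qed

lemma sum_t_div_sqrt_div_euler_prod_tendsto_1:
  fixes z :: "real \<Rightarrow> real"
  assumes z: "\<forall>\<^sub>F x in at_top. z x > exp (3 * lam x * ln (ln (lam x)))"
  shows "((\<lambda>x. (\<Sum>m\<in>{1..nat \<lfloor>z x\<rfloor>}. t x m / sqrt (real m)) / euler_prod x) \<longlongrightarrow> 1) at_top"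
proof -
  define B where "B x = exp (- rankin_exponent x * (3 * lam x * ln (ln (lam x)) - ln 2)
               + lam x * rankin_exponent x * exp (1 / ln (lam x)) * inv_p_upper x)" for x
  have B: "(B \<longlongrightarrow> 0) at_top"
    unfolding B_def rankin_exponent_def inv_p_upper_def lam_def by real_asymp
  have "eventually (\<lambda>x. exp (3 * lam x * ln (ln (lam x))) \<ge> 2) at_top"
    unfolding lam_def by real_asymp
  hence ev: "eventually (\<lambda>x. 1 - B x \<le> (\<Sum>m\<in>{1..nat \<lfloor>z x\<rfloor>}. t x m / sqrt (real m)) / euler_prod x
                        \<and> (\<Sum>m\<in>{1..nat \<lfloor>z x\<rfloor>}. t x m / sqrt (real m)) / euler_prod x \<le> 1) at_top"
    using z eventually_large_lam
  proof eventually_elim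
    case (elim x)
    define N where "N = nat \<lfloor>z x\<rfloor>"
    have z2: "z x \<ge> 2" using elim by linarith
    have N1: "N \<ge> 1" unfolding N_def using z2 by (simp add: le_nat_iff le_floor_iff)
    have "ln (z x / 2) \<le> ln (real N)" unfolding N_def using z2 by (intro ln_mono) linarith+
    moreover have "ln (exp (3 * lam x * ln (ln (lam x)))) < ln (z x)"
      using elim(2) z2 by (subst ln_less_cancel_iff) auto
    ultimately have "3 * lam x * ln (ln (lam x)) - ln 2 \<le> ln (real N)" using z2 by (simp add: ln_div)
    hence "- rankin_exponent x * ln (real N) \<le> - rankin_exponent x * (3 * lam x * ln (ln (lam x)) - ln 2)"
      using rankin_exponent_nonneg[OF elim(3)] by (simp add: mult_left_mono)
    hence "exp (- rankin_exponent x * ln (real N)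
               + lam x * rankin_exponent x * exp (1 / ln (lam x)) * inv_p_upper x) \<le> B x"
      unfolding B_def by simp
    hence "euler_prod x * exp (- rankin_exponent x * ln (real N)
               + lam x * rankin_exponent x * exp (1 / ln (lam x)) * inv_p_upper x) \<le> euler_prod x * B x"
      using euler_prod_ge_1[of x] large_lam_imp[OF elim(3)] by (intro mult_left_mono) auto
    hence "euler_prod x - (\<Sum>m\<in>{1..N}. t x m / sqrt (real m)) \<le> euler_prod x * B x"
      using euler_prod_minus_sum_t_div_sqrt_le[OF elim(3) N1] by linarith
    moreover have "(\<Sum>m\<in>{1..N}. t x m / sqrt (real m)) \<le> euler_prod x"
      using sum_t_div_sqrt_le_euler_prod[of x N] large_lam_imp[OF elim(3)] by simp
    ultimately show ?case
      using euler_prod_ge_1[of x] large_lam_imp[OF elim(3)] unfolding N_def by (simp add: field_simps)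
  qed
  have lim: "((\<lambda>x. 1 - B x) \<longlongrightarrow> 1) at_top" using tendsto_diff[OF tendsto_const B] by simp
  show ?thesis
    by (rule tendsto_sandwich[OF _ _ lim tendsto_const]) (use ev in \<open>auto elim: eventually_mono\<close>)
qed

lemma sum_t_div_sqrt_sim_euler_prod:
  fixes z :: "real \<Rightarrow> real"
  assumes "\<forall>\<^sub>F x in at_top. z x > exp (3 * lam x * ln (ln (lam x)))"
  shows "(\<lambda>x. \<Sum>m\<in>{1..nat \<lfloor>z x\<rfloor>}. t x m / sqrt (real m))
           \<sim>[at_top] (\<lambda>x. \<Prod>p\<in>{p. prime p \<and> real p \<le> exp ((ln (lam x))^2)}. (1 + t x p / sqrt (real p)))"
  unfolding prod_primes_t_eq_euler_prod
  by (rule asymp_equivI') (rule sum_t_div_sqrt_div_euler_prod_tendsto_1[OF assms])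

section \<open>The size of the Euler product\<close>

lemma ln_euler_prod_eq: "lam x \<ge> 0 \<Longrightarrow> ln (euler_prod x) = (\<Sum>p\<in>prime_window x. ln (1 + t_weight x p))"
proof -
  assume "lam x \<ge> 0"
  hence "1 + t_weight x p > 0" for p using t_weight_nonneg[of x p] by linarith
  thus ?thesis unfolding euler_prod_def by (intro ln_prod) (auto simp: less_imp_neq[symmetric])
qed

lemma ln_one_plus_t_weight_le:
  assumes "large_lam x" "p \<in> prime_window x"
  shows "ln (1 + t_weight x p) \<le> lam x * (1 / (real p * ln (real p)))"
  using ln_add_one_self_le_self[of "t_weight x p"] t_weight_nonneg[of x p]
    large_lam_imp[OF assms(1)] t_weight_le[OF assms] by simp

lemma ln_one_plus_t_weight_ge:
  assumes x: "large_lam x" and p: "p \<in> prime_window x"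
  defines "L \<equiv> ln (lam x)"
  shows "(1 - 1 / (2 * L)) * (1 - 1 / (4 * L^2)) * (lam x * (1 / (real p * ln (real p))))
           \<le> ln (1 + t_weight x p)"
proof -
  note l = large_lam_imp[OF x] and rp = r_prime_in_window[OF x p] and b = prime_window_bounds[OF x p]
  define \<rho> where "\<rho> = r_prime x p"
  define q where "q = \<rho> / sqrt (real p)"
  define g where "g = t_weight x p"
  have l3: "L \<ge> 3" using l by (simp add: L_def)
  have \<rho>: "0 \<le> \<rho>" "\<rho> \<le> 1 / (2 * L)" using rp by (auto simp: \<rho>_def L_def)
  have q: "0 \<le> q" "q \<le> \<rho>" unfolding q_def using \<rho> b
    by (auto simp: divide_le_eq mult_le_cancel_left1 intro: order_trans[of 1 2 "real p"])
  have gq: "g = q / (1 + \<rho>^2)" unfolding g_def t_weight_def t_prime_def q_def \<rho>_def by simp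
  have g0: "g \<ge> 0" using q by (simp add: gq)
  have "\<rho>^2 \<le> (1 / (2 * L))^2" using \<rho> by (intro power_mono) auto
  hence \<rho>2: "\<rho>^2 \<le> 1 / (4 * L^2)" by (simp add: power_divide power_mult_distrib)
  have "g \<le> q" unfolding gq using q by (simp add: divide_le_eq mult_le_cancel_left1 add_pos_nonneg)
  hence g_le: "g \<le> 1 / (2 * L)" using q \<rho> by linarith
  have "q * (1 - \<rho>^2) * (1 + \<rho>^2) = q * (1 - \<rho>^4)" by (simp add: algebra_simps power4_eq_xxxx power2_eq_square)
  also have "\<dots> \<le> q" by (rule mult_left_le) (use q \<rho> in auto)
  finally have "q * (1 - \<rho>^2) \<le> g" unfolding gq by (simp add: le_divide_eq add_pos_nonneg)
  moreover have "q * (1 - 1 / (4 * L^2)) \<le> q * (1 - \<rho>^2)" using \<rho>2 q by (intro mult_left_mono) auto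
  ultimately have "q * (1 - 1 / (4 * L^2)) \<le> g" by linarith
  moreover have "0 \<le> 1 - 1 / (2 * L)" using l3 by (simp add: field_simps)
  ultimately have "q * (1 - 1 / (4 * L^2)) * (1 - 1 / (2 * L)) \<le> g * (1 - 1 / (2 * L))"
    by (rule mult_right_mono)
  also have "\<dots> \<le> g * (1 - g)" using g_le g0 by (intro mult_left_mono) auto
  also have "\<dots> \<le> g / (1 + g)"
    using g0 by (simp add: le_divide_eq algebra_simps)
  also have "\<dots> \<le> ln (1 + g)"
    using ln_le_minus_one[of "1 / (1 + g)"] g0 by (simp add: ln_div field_simps)
  finally show ?thesis
    unfolding g_def q_def \<rho>_def rp(1) by (simp add: mult_ac)
qed

definition ln_euler_prod_lower :: "real \<Rightarrow> real" where
  "ln_euler_prod_lower x = (1 - 1 / (2 * ln (lam x))) * (1 - 1 / (4 * (ln (lam x))^2)) * inv_p_ln_p_lower x"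

lemma ln_euler_prod_bounds:
  assumes x: "large_lam x"
  shows "lam x * ln_euler_prod_lower x \<le> ln (euler_prod x)" "ln (euler_prod x) \<le> lam x * inv_p_ln_p_upper x"
proof -
  note l = large_lam_imp[OF x]
  define c where "c = (1 - 1 / (2 * ln (lam x))) * (1 - 1 / (4 * (ln (lam x))^2))"
  have "(ln (lam x))^2 \<ge> 3^2" using l by (intro power_mono) auto
  hence c0: "c \<ge> 0" unfolding c_def using l by (intro mult_nonneg_nonneg) (auto simp: field_simps)
  have lnP: "ln (euler_prod x) = (\<Sum>p\<in>prime_window x. ln (1 + t_weight x p))"
    using ln_euler_prod_eq l by simp
  have "ln (euler_prod x) \<le> (\<Sum>p\<in>prime_window x. lam x * (1 / (real p * ln (real p))))"
    unfolding lnP by (intro sum_mono ln_one_plus_t_weight_le[OF x])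
  also have "\<dots> \<le> lam x * inv_p_ln_p_upper x"
    unfolding sum_distrib_left[symmetric] using sum_window_inv_p_ln_p_le[OF x] l by (intro mult_left_mono) auto
  finally show "ln (euler_prod x) \<le> lam x * inv_p_ln_p_upper x" .
  have "lam x * ln_euler_prod_lower x = c * lam x * inv_p_ln_p_lower x"
    unfolding ln_euler_prod_lower_def c_def by simp
  also have "\<dots> \<le> c * lam x * (\<Sum>p\<in>prime_window x. 1 / (real p * ln (real p)))"
    using sum_window_inv_p_ln_p_ge[OF x] l c0 by (intro mult_left_mono) auto
  also have "\<dots> = (\<Sum>p\<in>prime_window x. c * (lam x * (1 / (real p * ln (real p)))))"
    by (simp add: sum_distrib_left mult_ac)
  also have "\<dots> \<le> ln (euler_prod x)"
    unfolding lnP c_def by (intro sum_mono ln_one_plus_t_weight_ge[OF x])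
  finally show "lam x * ln_euler_prod_lower x \<le> ln (euler_prod x)" .
qed

lemma ln_euler_prod_sim:
  "(\<lambda>x. ln (\<Prod>p\<in>{p. prime p \<and> real p \<le> exp ((ln (lam x))^2)}. (1 + t x p / sqrt (real p))))
     \<sim>[at_top] (\<lambda>x. lam x / (2 * ln (lam x)))"
  unfolding prod_primes_t_eq_euler_prod
proof (rule asymp_equivI')
  have lU: "((\<lambda>x. 2 * ln (lam x) * inv_p_ln_p_upper x) \<longlongrightarrow> 1) at_top"
    unfolding inv_p_ln_p_upper_def lam_def by real_asymp
  have lL: "((\<lambda>x. 2 * ln (lam x) * ln_euler_prod_lower x) \<longlongrightarrow> 1) at_top"
    unfolding ln_euler_prod_lower_def inv_p_ln_p_lower_def lam_def by real_asymp
  have ev: "eventually (\<lambda>x. 2 * ln (lam x) * ln_euler_prod_lower x \<le> ln (euler_prod x) / (lam x / (2 * ln (lam x)))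
             \<and> ln (euler_prod x) / (lam x / (2 * ln (lam x))) \<le> 2 * ln (lam x) * inv_p_ln_p_upper x) at_top"
    using eventually_large_lam
  proof eventually_elim
    case (elim x)
    note l = large_lam_imp[OF elim] and c = ln_euler_prod_bounds[OF elim]
    have eq: "ln (euler_prod x) / (lam x / (2 * ln (lam x))) = 2 * ln (lam x) * (ln (euler_prod x) / lam x)"
      using l by (simp add: field_simps)
    have "ln_euler_prod_lower x \<le> ln (euler_prod x) / lam x" "ln (euler_prod x) / lam x \<le> inv_p_ln_p_upper x"
      using c l by (simp_all add: field_simps mult.commute)
    thus ?case unfolding eq using l by (intro conjI mult_left_mono) auto
  qed
  show "((\<lambda>x. ln (euler_prod x) / (lam x / (2 * ln (lam x)))) \<longlongrightarrow> 1) at_top"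
    by (rule tendsto_sandwich[OF _ _ lL lU]) (use ev in \<open>auto elim: eventually_mono\<close>)
qed

section \<open>The coprime double sum\<close>

definition r_sq_powr :: "real \<Rightarrow> real \<Rightarrow> nat \<Rightarrow> real" where
  "r_sq_powr x a p = (r_prime x p)^2 * real p powr a"

definition u_powr :: "real \<Rightarrow> real \<Rightarrow> nat \<Rightarrow> real" where
  "u_powr x a p = r_prime x p * real p powr (a - 1/2) / (1 + r_sq_powr x a p)"

lemma r_sq_powr_nonneg: "r_sq_powr x a p \<ge> 0"
  by (simp add: r_sq_powr_def)

lemma u_powr_nonneg: "lam x \<ge> 0 \<Longrightarrow> u_powr x a p \<ge> 0"
  using r_prime_nonneg[of x p] r_sq_powr_nonneg[of x a p] by (simp add: u_powr_def add_pos_nonneg)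

lemma u_powr_nonzero_imp: "u_powr x a p \<noteq> 0 \<Longrightarrow> p \<in> prime_window x"
  by (auto simp: u_powr_def intro: r_prime_nonzero_imp)

lemma infsum_r_sq_powr_coprime:
  assumes B: "B \<subseteq> prime_window x"
  shows "infsum (\<lambda>d. (r x d)^2 * real d powr a) {d. d \<ge> 1 \<and> coprime d (\<Prod>B)}
           = (\<Prod>p\<in>prime_window x - B. 1 + r_sq_powr x a p)"
proof -
  note fB = subset_prime_window_imp[OF B]
  have "infsum (\<lambda>d. (r x d)^2 * real d powr a) {d. d \<ge> 1 \<and> coprime d (\<Prod>B)}
      = (\<Sum>C\<in>{C\<in>Pow (prime_window x). coprime (\<Prod>C) (\<Prod>B)}. (r x (\<Prod>C))^2 * real (\<Prod>C) powr a)"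
    using r_nonzero_imp by (intro infsum_supported_on_Prod_Pow[OF finite_prime_window prime_window_primes]) auto
  also have "{C\<in>Pow (prime_window x). coprime (\<Prod>C) (\<Prod>B)} = Pow (prime_window x - B)"
  proof (rule set_eqI)
    fix C
    show "C \<in> {C\<in>Pow (prime_window x). coprime (\<Prod>C) (\<Prod>B)} \<longleftrightarrow> C \<in> Pow (prime_window x - B)"
      using coprime_prod_primes_iff[OF subset_prime_window_imp[of C] fB] by (cases "C \<subseteq> prime_window x") auto
  qed
  also have "(\<Sum>C\<in>Pow (prime_window x - B). (r x (\<Prod>C))^2 * real (\<Prod>C) powr a)
      = (\<Sum>C\<in>Pow (prime_window x - B). \<Prod>p\<in>C. r_sq_powr x a p)"
  proof (intro sum.cong refl)
    fix C assume "C \<in> Pow (prime_window x - B)"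
    hence "C \<subseteq> prime_window x" by auto
    note fC = subset_prime_window_imp[OF this]
    show "(r x (\<Prod>C))^2 * real (\<Prod>C) powr a = (\<Prod>p\<in>C. r_sq_powr x a p)"
      unfolding r_eq_sqfree_mult sqfree_mult_prod_primes[OF fC] of_nat_Prod_powr r_sq_powr_def
      by (simp add: prod.distrib prod_power_distrib)
  qed
  also have "\<dots> = (\<Prod>p\<in>prime_window x - B. 1 + r_sq_powr x a p)"
    by (simp add: sum_Pow_prod_eq_prod_1_plus)
  finally show ?thesis .
qed

lemma infsum_r_sq: "infsum (\<lambda>d. (r x d)^2) {d. d \<ge> 1} = (\<Prod>p\<in>prime_window x. 1 + (r_prime x p)^2)"
proof -
  have "infsum (\<lambda>d. (r x d)^2) {d. d \<ge> 1}
      = infsum (\<lambda>d. (r x d)^2 * real d powr 0) {d. d \<ge> 1 \<and> coprime d (\<Prod>{})}"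
    by (intro infsum_cong_neutral) auto
  also have "\<dots> = (\<Prod>p\<in>prime_window x. 1 + r_sq_powr x 0 p)"
    by (subst infsum_r_sq_powr_coprime) simp_all
  also have "\<dots> = (\<Prod>p\<in>prime_window x. 1 + (r_prime x p)^2)"
    using prime_window_primes[of x] by (intro prod.cong) (auto simp: r_sq_powr_def dest: prime_gt_0_nat)
  finally show ?thesis .
qed

lemma coprime_pair_term_eq:
  assumes AB: "A \<subseteq> prime_window x" "B \<subseteq> prime_window x" "A \<inter> B = {}"
  shows "r x (\<Prod>A) * r x (\<Prod>B) / (real (\<Prod>A * \<Prod>B)) powr (1/2 - a) *
           infsum (\<lambda>d. (r x d)^2 * real d powr a) {d. d \<ge> 1 \<and> coprime d (\<Prod>A * \<Prod>B)}
         = (\<Prod>p\<in>prime_window x. 1 + r_sq_powr x a p) * (sqfree_mult (u_powr x a) (\<Prod>A) * sqfree_mult (u_powr x a) (\<Prod>B))"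
proof -
  note fA = subset_prime_window_imp[OF AB(1)] and fB = subset_prime_window_imp[OF AB(2)]
  have fAB: "finite (A \<union> B)" "\<forall>p\<in>A \<union> B. prime p" using fA fB by auto
  define h where "h p = r_prime x p / real p powr (1/2 - a)" for p
  define w where "w p = 1 + r_sq_powr x a p" for p
  have w0: "w p > 0" for p unfolding w_def using r_sq_powr_nonneg[of x a p] by linarith
  have u: "u_powr x a p = h p / w p" for p
  proof -
    have "real p powr (a - 1/2) = real p powr (- (1/2 - a))" by simp
    also have "\<dots> = 1 / real p powr (1/2 - a)" by (rule powr_minus_divide)
    finally show ?thesis unfolding u_powr_def h_def w_def by simp
  qed
  have AB_prod: "\<Prod>A * \<Prod>B = \<Prod>(A \<union> B)" using AB fA fB by (simp add: prod.union_disjoint)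
  have r_div: "r x (\<Prod>C) / real (\<Prod>C) powr (1/2 - a) = (\<Prod>p\<in>C. h p)" if "finite C" "\<forall>p\<in>C. prime p" for C
    unfolding r_eq_sqfree_mult sqfree_mult_prod_primes[OF that] of_nat_Prod_powr h_def by (simp add: prod_dividef)
  have "r x (\<Prod>A) * r x (\<Prod>B) / (real (\<Prod>A * \<Prod>B)) powr (1/2 - a)
      = (r x (\<Prod>A) / real (\<Prod>A) powr (1/2 - a)) * (r x (\<Prod>B) / real (\<Prod>B) powr (1/2 - a))"
    by (simp add: powr_mult)
  also have "\<dots> = (\<Prod>p\<in>A. h p) * (\<Prod>p\<in>B. h p)" using r_div fA fB by simp
  finally have rr: "r x (\<Prod>A) * r x (\<Prod>B) / (real (\<Prod>A * \<Prod>B)) powr (1/2 - a) = (\<Prod>p\<in>A. h p) * (\<Prod>p\<in>B. h p)" .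
  have I: "infsum (\<lambda>d. (r x d)^2 * real d powr a) {d. d \<ge> 1 \<and> coprime d (\<Prod>A * \<Prod>B)}
         = (\<Prod>p\<in>prime_window x - (A \<union> B). w p)"
    unfolding AB_prod w_def using AB by (intro infsum_r_sq_powr_coprime) auto
  have "(\<Prod>p\<in>prime_window x. 1 + r_sq_powr x a p)
      = (\<Prod>p\<in>prime_window x - (A \<union> B). w p) * ((\<Prod>p\<in>A. w p) * (\<Prod>p\<in>B. w p))"
    unfolding w_def[symmetric] using AB fA fB
    by (simp add: prod.subset_diff[of "A \<union> B" "prime_window x"] prod.union_disjoint)
  moreover have "(\<Prod>p\<in>C. h p) = (\<Prod>p\<in>C. w p) * sqfree_mult (u_powr x a) (\<Prod>C)"
    if "finite C" "\<forall>p\<in>C. prime p" for C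
  proof -
    have "(\<Prod>p\<in>C. w p) > 0" using w0 by (intro prod_pos) auto
    thus ?thesis unfolding sqfree_mult_prod_primes[OF that] u by (simp add: prod_dividef)
  qed
  ultimately show ?thesis unfolding rr I using fA fB by (simp add: mult_ac)
qed

lemma coprime_pair_term_le:
  assumes "lam x \<ge> 0" "coprime m1 m2"
  shows "r x m1 * r x m2 / (real (m1 * m2)) powr (1/2 - a) *
           infsum (\<lambda>d. (r x d)^2 * real d powr a) {d. d \<ge> 1 \<and> coprime d (m1 * m2)}
         \<le> (\<Prod>p\<in>prime_window x. 1 + r_sq_powr x a p) * (sqfree_mult (u_powr x a) m1 * sqfree_mult (u_powr x a) m2)"
proof (cases "r x m1 = 0 \<or> r x m2 = 0")
  case True
  have "0 \<le> (\<Prod>p\<in>prime_window x. 1 + r_sq_powr x a p) * (sqfree_mult (u_powr x a) m1 * sqfree_mult (u_powr x a) m2)"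
    using r_sq_powr_nonneg u_powr_nonneg[OF assms(1)]
    by (intro mult_nonneg_nonneg prod_nonneg sqfree_mult_nonneg) (auto intro: add_nonneg_nonneg)
  thus ?thesis using True by auto
next
  case False
  then obtain A B where A: "A \<subseteq> prime_window x" "m1 = \<Prod>A" and B: "B \<subseteq> prime_window x" "m2 = \<Prod>B"
    using r_nonzero_imp[of x m1] r_nonzero_imp[of x m2] by blast
  have "A \<inter> B = {}"
    using coprime_prod_primes_iff[OF subset_prime_window_imp[OF A(1)] subset_prime_window_imp[OF B(1)]]
      assms(2) A B by simp
  thus ?thesis using coprime_pair_term_eq[OF A(1) B(1)] A B by simp
qed

lemma sum_sqfree_mult_u_powr_le:
  assumes "lam x \<ge> 0"
  shows "(\<Sum>m\<in>{1..N}. sqfree_mult (u_powr x a) m) \<le> (\<Prod>p\<in>prime_window x. 1 + u_powr x a p)"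
proof -
  have "(\<Sum>m\<in>{1..N}. sqfree_mult (u_powr x a) m)
      = (\<Sum>A\<in>{A\<in>Pow (prime_window x). \<Prod>A \<le> N}. sqfree_mult (u_powr x a) (\<Prod>A))"
    by (intro sum_supported_on_Prod_Pow[OF finite_prime_window prime_window_primes]
        sqfree_mult_nonzero_imp_Prod_Pow[OF u_powr_nonzero_imp])
  also have "\<dots> = (\<Sum>A\<in>{A\<in>Pow (prime_window x). \<Prod>A \<le> N}. \<Prod>p\<in>A. u_powr x a p)"
    by (intro sum.cong refl sqfree_mult_prod_primes) (auto dest: subset_prime_window_imp)
  also have "\<dots> \<le> (\<Sum>A\<in>Pow (prime_window x). \<Prod>p\<in>A. u_powr x a p)"
    using u_powr_nonneg[OF assms] by (intro sum_mono2 prod_nonneg) auto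
  also have "\<dots> = (\<Prod>p\<in>prime_window x. 1 + u_powr x a p)" by (simp add: sum_Pow_prod_eq_prod_1_plus)
  finally show ?thesis .
qed

lemma coprime_double_sum_le:
  assumes l: "lam x \<ge> 0"
  shows "(\<Sum>(m1, m2)\<in>{(m1, m2). m1 \<in> {1..N} \<and> m2 \<in> {1..N} \<and> coprime m1 m2}.
            r x m1 * r x m2 / (real (m1 * m2)) powr (1/2 - a) *
            infsum (\<lambda>d. (r x d)^2 * real d powr a) {d. d \<ge> 1 \<and> coprime d (m1 * m2)})
         \<le> (\<Prod>p\<in>prime_window x. 1 + r_sq_powr x a p) * (\<Prod>p\<in>prime_window x. 1 + u_powr x a p)^2"
proof -
  define V where "V = (\<Prod>p\<in>prime_window x. 1 + r_sq_powr x a p)"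
  define F where "F = sqfree_mult (u_powr x a)"
  have V0: "V \<ge> 0" unfolding V_def using r_sq_powr_nonneg by (intro prod_nonneg) (auto intro: add_nonneg_nonneg)
  have F0: "F m \<ge> 0" for m unfolding F_def using u_powr_nonneg[OF l] by (intro sqfree_mult_nonneg) auto
  have "(\<Sum>(m1, m2)\<in>{(m1, m2). m1 \<in> {1..N} \<and> m2 \<in> {1..N} \<and> coprime m1 m2}.
            r x m1 * r x m2 / (real (m1 * m2)) powr (1/2 - a) *
            infsum (\<lambda>d. (r x d)^2 * real d powr a) {d. d \<ge> 1 \<and> coprime d (m1 * m2)})
      \<le> (\<Sum>(m1, m2)\<in>{(m1, m2). m1 \<in> {1..N} \<and> m2 \<in> {1..N} \<and> coprime m1 m2}. V * (F m1 * F m2))"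
  proof (intro sum_mono)
    fix q assume "q \<in> {(m1, m2). m1 \<in> {1..N} \<and> m2 \<in> {1..N} \<and> coprime m1 m2}"
    then obtain m1 m2 where "q = (m1, m2)" "coprime m1 m2" by auto
    thus "(case q of (m1, m2) \<Rightarrow> r x m1 * r x m2 / (real (m1 * m2)) powr (1/2 - a) *
            infsum (\<lambda>d. (r x d)^2 * real d powr a) {d. d \<ge> 1 \<and> coprime d (m1 * m2)})
          \<le> (case q of (m1, m2) \<Rightarrow> V * (F m1 * F m2))"
      unfolding V_def F_def using coprime_pair_term_le[OF l] by simp
  qed
  also have "\<dots> \<le> (\<Sum>(m1, m2)\<in>{1..N} \<times> {1..N}. V * (F m1 * F m2))"
    using V0 F0 by (intro sum_mono2) auto
  also have "\<dots> = V * (\<Sum>m\<in>{1..N}. F m)^2"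
    by (simp add: sum.cartesian_product[symmetric] sum_distrib_left sum_distrib_right power2_eq_square mult_ac)
  also have "\<dots> \<le> V * (\<Prod>p\<in>prime_window x. 1 + u_powr x a p)^2"
    using F0 V0 sum_sqfree_mult_u_powr_le[OF l] unfolding F_def
    by (intro mult_left_mono power_mono sum_nonneg) auto
  finally show ?thesis unfolding V_def .
qed

lemma powr_rankin_exponent_minus_1_le:
  assumes "large_lam x" "p \<in> prime_window x"
  shows "real p powr rankin_exponent x - 1
           \<le> rankin_exponent x * ln (real p) + (rankin_exponent x * ln (real p))^2"
  using exp_bound[of "rankin_exponent x * ln (real p)"] rankin_exponent_bounds[OF assms] by simp

lemma prod_r_sq_powr_le:
  assumes x: "large_lam x"
  defines "\<beta> \<equiv> rankin_exponent x"
  shows "(\<Prod>p\<in>prime_window x. 1 + r_sq_powr x \<beta> p)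
          \<le> (\<Prod>p\<in>prime_window x. 1 + (r_prime x p)^2)
             * exp ((lam x)^2 * \<beta> * inv_p_ln_p_upper x + (lam x)^2 * \<beta>^2 * inv_p_upper x)"
proof -
  have "(\<Prod>p\<in>prime_window x. 1 + r_sq_powr x \<beta> p)
      \<le> (\<Prod>p\<in>prime_window x. 1 + (r_prime x p)^2) * exp (\<Sum>p\<in>prime_window x. r_sq_powr x \<beta> p - (r_prime x p)^2)"
    using rankin_exponent_bounds(5)[OF x] unfolding r_sq_powr_def \<beta>_def
    by (intro prod_one_plus_le_exp_sum_diff) (auto simp: mult_le_cancel_left1)
  also have "(\<Sum>p\<in>prime_window x. r_sq_powr x \<beta> p - (r_prime x p)^2)
      \<le> (\<Sum>p\<in>prime_window x. (lam x)^2 * \<beta> * (1 / (real p * ln (real p))) + (lam x)^2 * \<beta>^2 * (1 / real p))"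
  proof (intro sum_mono)
    fix p assume p: "p \<in> prime_window x"
    note b = prime_window_bounds[OF x p]
    have "r_sq_powr x \<beta> p - (r_prime x p)^2 = (r_prime x p)^2 * (real p powr \<beta> - 1)"
      unfolding r_sq_powr_def by (simp add: algebra_simps)
    also have "\<dots> \<le> (r_prime x p)^2 * (\<beta> * ln (real p) + (\<beta> * ln (real p))^2)"
      unfolding \<beta>_def by (intro mult_left_mono powr_rankin_exponent_minus_1_le[OF x p]) auto
    also have "\<dots> = (lam x)^2 * \<beta> * (1 / (real p * ln (real p))) + (lam x)^2 * \<beta>^2 * (1 / real p)"
      unfolding r_prime_in_window(2)[OF x p] using b by (simp add: field_simps power2_eq_square)
    finally show "r_sq_powr x \<beta> p - (r_prime x p)^2
        \<le> (lam x)^2 * \<beta> * (1 / (real p * ln (real p))) + (lam x)^2 * \<beta>^2 * (1 / real p)" .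
  qed
  also have "\<dots> \<le> (lam x)^2 * \<beta> * inv_p_ln_p_upper x + (lam x)^2 * \<beta>^2 * inv_p_upper x"
    unfolding sum.distrib sum_distrib_left[symmetric] \<beta>_def
    using sum_window_inv_p_ln_p_le[OF x] sum_window_inv_p_le[OF x] rankin_exponent_nonneg[OF x]
    by (intro add_mono mult_left_mono) auto
  finally show ?thesis by (simp add: mult_left_mono prod_nonneg)
qed

lemma u_powr_minus_t_weight_bounds:
  assumes x: "large_lam x" and p: "p \<in> prime_window x"
  defines "\<beta> \<equiv> rankin_exponent x"
  shows "t_weight x p \<le> u_powr x \<beta> p" "u_powr x \<beta> p - t_weight x p \<le> 2 * lam x * \<beta> * (1 / real p)"
proof -
  note rb = rankin_exponent_bounds[OF x p] and b = prime_window_bounds[OF x p]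
  define s where "s = real p powr \<beta>"
  define c where "c = (r_prime x p)^2"
  define k where "k = r_prime x p / sqrt (real p)"
  define y where "y = \<beta> * ln (real p)"
  have s1: "s \<ge> 1" using rb by (simp add: s_def \<beta>_def)
  have c0: "c \<ge> 0" by (simp add: c_def)
  have k0: "k \<ge> 0" unfolding k_def using r_prime_in_window(3)[OF x p] by simp
  have u: "u_powr x \<beta> p = k * s / (1 + c * s)"
    using b unfolding u_powr_def r_sq_powr_def s_def c_def k_def
    by (simp add: powr_diff powr_half_sqrt mult.commute)
  have g: "t_weight x p = k / (1 + c)"
    unfolding t_weight_def t_prime_def c_def k_def by simp
  have "1 + c * s > 0" "1 + c > 0" using c0 s1 by (auto intro: add_pos_nonneg)
  hence diff: "u_powr x \<beta> p - t_weight x p = k * (s - 1) / ((1 + c * s) * (1 + c))"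
    unfolding u g by (simp add: field_simps)
  have "1 + c * s \<ge> 1" "1 + c \<ge> 1" using c0 s1 by simp_all
  hence den: "(1 + c * s) * (1 + c) \<ge> 1" using mult_mono[of 1 "1 + c * s" 1 "1 + c"] by simp
  have ks0: "k * (s - 1) \<ge> 0" using k0 s1 by simp
  have "k * (s - 1) / ((1 + c * s) * (1 + c)) \<ge> 0" using ks0 den by simp
  thus "t_weight x p \<le> u_powr x \<beta> p" using diff by linarith
  have "u_powr x \<beta> p - t_weight x p \<le> k * (s - 1)"
    unfolding diff using ks0 den by (simp add: divide_le_eq mult_le_cancel_left1)
  also have "\<dots> \<le> k * (y + y^2)"
    using powr_rankin_exponent_minus_1_le[OF x p] k0 unfolding s_def y_def \<beta>_def by (intro mult_left_mono) auto
  also have "\<dots> \<le> k * (2 * y)"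
    using mult_left_le[OF order_trans[OF rb(2,3)] rb(1)] k0
    unfolding y_def \<beta>_def by (intro mult_left_mono) (auto simp: power2_eq_square)
  also have "\<dots> = 2 * lam x * \<beta> * (1 / real p)"
    unfolding k_def y_def r_prime_in_window(1)[OF x p] using b by (simp add: field_simps)
  finally show "u_powr x \<beta> p - t_weight x p \<le> 2 * lam x * \<beta> * (1 / real p)" .
qed

lemma prod_u_powr_le:
  assumes x: "large_lam x"
  defines "\<beta> \<equiv> rankin_exponent x"
  shows "(\<Prod>p\<in>prime_window x. 1 + u_powr x \<beta> p) \<le> euler_prod x * exp (2 * lam x * \<beta> * inv_p_upper x)"
proof -
  note l = large_lam_imp[OF x]
  have "(\<Prod>p\<in>prime_window x. 1 + u_powr x \<beta> p)
      \<le> euler_prod x * exp (\<Sum>p\<in>prime_window x. u_powr x \<beta> p - t_weight x p)"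
    unfolding euler_prod_def \<beta>_def using u_powr_minus_t_weight_bounds(1)[OF x] t_weight_nonneg[of x] l
    by (intro prod_one_plus_le_exp_sum_diff) auto
  also have "(\<Sum>p\<in>prime_window x. u_powr x \<beta> p - t_weight x p) \<le> (\<Sum>p\<in>prime_window x. 2 * lam x * \<beta> * (1 / real p))"
    unfolding \<beta>_def by (intro sum_mono u_powr_minus_t_weight_bounds(2)[OF x])
  also have "\<dots> \<le> 2 * lam x * \<beta> * inv_p_upper x"
    unfolding sum_distrib_left[symmetric] \<beta>_def
    using sum_window_inv_p_le[OF x] rankin_exponent_nonneg[OF x] l by (intro mult_left_mono) auto
  finally show ?thesis using euler_prod_ge_1[of x] l by (simp add: mult_left_mono)
qed

lemma coprime_double_sum_ratio_le:
  fixes N :: nat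
  assumes x: "large_lam x" "x > 0" and D: "(\<Sum>m\<in>{1..nat \<lfloor>x\<rfloor>}. t x m / sqrt (real m)) \<ge> euler_prod x / 2"
  defines "\<beta> \<equiv> rankin_exponent x"
  shows "x powr (- \<beta>) *
           (\<Sum>(m1, m2)\<in>{(m1, m2). m1 \<in> {1..N} \<and> m2 \<in> {1..N} \<and> coprime m1 m2}.
              r x m1 * r x m2 / (real (m1 * m2)) powr (1/2 - \<beta>) *
              infsum (\<lambda>d. (r x d)^2 * real d powr \<beta>) {d. d \<ge> 1 \<and> coprime d (m1 * m2)})
         / ((\<Sum>m\<in>{1..nat \<lfloor>x\<rfloor>}. t x m / sqrt (real m))^2 * infsum (\<lambda>d. (r x d)^2) {d. d \<ge> 1})
         \<le> exp (- \<beta> * ln x + ((lam x)^2 * \<beta> * inv_p_ln_p_upper x + (lam x)^2 * \<beta>^2 * inv_p_upper x)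
                + 2 * (2 * lam x * \<beta> * inv_p_upper x) + 2 * ln 2)"
    (is "x powr (- \<beta>) * ?S / (?D^2 * _) \<le> exp (- \<beta> * ln x + ?X1 + 2 * ?X2 + 2 * ln 2)")
proof -
  note l = large_lam_imp[OF x(1)]
  define P where "P = euler_prod x"
  define W where "W = (\<Prod>p\<in>prime_window x. 1 + (r_prime x p)^2)"
  define V where "V = (\<Prod>p\<in>prime_window x. 1 + r_sq_powr x \<beta> p)"
  define U where "U = (\<Prod>p\<in>prime_window x. 1 + u_powr x \<beta> p)"
  have P1: "P \<ge> 1" using euler_prod_ge_1 l by (simp add: P_def)
  have W1: "W \<ge> 1" unfolding W_def by (intro prod_ge_1) auto
  have V0: "V \<ge> 0" unfolding V_def using r_sq_powr_nonneg by (intro prod_nonneg) (auto intro: add_nonneg_nonneg)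
  have U0: "U \<ge> 0" unfolding U_def using u_powr_nonneg l by (intro prod_nonneg) (auto intro: add_nonneg_nonneg)
  have "?S \<le> V * U^2" unfolding V_def U_def using coprime_double_sum_le l by simp
  also have "\<dots> \<le> (W * exp ?X1) * (P * exp ?X2)^2"
    using prod_r_sq_powr_le[OF x(1)] prod_u_powr_le[OF x(1)] V0 U0 W1
    unfolding V_def U_def W_def P_def \<beta>_def by (intro mult_mono power_mono) auto
  finally have num: "?S \<le> (W * exp ?X1) * (P * exp ?X2)^2" .
  have den: "?D^2 * W \<ge> (P / 2)^2 * W"
    using D P1 W1 unfolding P_def by (intro mult_right_mono power_mono) auto
  have "x powr (- \<beta>) * ?S / (?D^2 * W) \<le> x powr (- \<beta>) * ((W * exp ?X1) * (P * exp ?X2)^2) / ((P / 2)^2 * W)"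
    using num den P1 W1 by (intro frac_le mult_left_mono mult_nonneg_nonneg) auto
  also have "\<dots> = x powr (- \<beta>) * exp ?X1 * (exp ?X2)^2 * 4"
    using P1 W1 by (simp add: field_simps power2_eq_square)
  also have "\<dots> = exp (- \<beta> * ln x) * exp ?X1 * exp (2 * ?X2) * exp (2 * ln 2)"
  proof -
    have "exp (- \<beta> * ln x) = x powr (- \<beta>)" using x(2) by (simp add: powr_def)
    moreover have "exp (2 * ln 2) = (4::real)" by (simp add: exp_double)
    ultimately show ?thesis by (simp only: exp_double)
  qed
  also have "\<dots> = exp (- \<beta> * ln x + ?X1 + 2 * ?X2 + 2 * ln 2)" by (simp only: exp_add)
  
  finally show ?thesis unfolding W_def infsum_r_sq .
qed

lemma coprime_double_sum_ratio_eventually_le: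
  fixes z :: "real \<Rightarrow> real"
  shows "\<forall>\<^sub>F x in at_top.
     let \<alpha> = 1 / (ln (lam x))^3 in
     x powr (- \<alpha>) *
       (\<Sum>(m1, m2)\<in>{(m1, m2). m1 \<in> {1..nat \<lfloor>z x\<rfloor>} \<and> m2 \<in> {1..nat \<lfloor>z x\<rfloor>} \<and> coprime m1 m2}.
          r x m1 * r x m2 / (real (m1 * m2)) powr (1/2 - \<alpha>) *
          infsum (\<lambda>d. (r x d)^2 * real d powr \<alpha>) {d. d \<ge> 1 \<and> coprime d (m1 * m2)})
     / ((\<Sum>m\<in>{1..nat \<lfloor>x\<rfloor>}. t x m / sqrt (real m))^2 * infsum (\<lambda>d. (r x d)^2) {d. d \<ge> 1})
     \<le> exp (- 32 * ln x / (ln (ln x))^4)"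
proof -
  have "\<forall>\<^sub>F x in at_top. x > exp (3 * lam x * ln (ln (lam x)))"
    unfolding lam_def by real_asymp
  hence "((\<lambda>x. (\<Sum>m\<in>{1..nat \<lfloor>x\<rfloor>}. t x m / sqrt (real m)) / euler_prod x) \<longlongrightarrow> 1) at_top"
    using sum_t_div_sqrt_div_euler_prod_tendsto_1[of id] by simp
  hence half: "\<forall>\<^sub>F x in at_top. (\<Sum>m\<in>{1..nat \<lfloor>x\<rfloor>}. t x m / sqrt (real m)) / euler_prod x > 1/2"
    by (rule order_tendstoD) simp
  \<comment> \<open>The losses cancel the gain \<open>x powr - \<alpha>\<close> only up to a factor of order
    \<open>ln (ln (ln x)) / ln (ln x)\<close>, which is still more than the stated exponent requires.\<close>
  have exponent: "\<forall>\<^sub>F x in at_top.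
      - rankin_exponent x * ln x
        + ((lam x)^2 * rankin_exponent x * inv_p_ln_p_upper x + (lam x)^2 * (rankin_exponent x)^2 * inv_p_upper x)
        + 2 * (2 * lam x * rankin_exponent x * inv_p_upper x) + 2 * ln 2
      \<le> - 32 * ln x / (ln (ln x))^4"
    unfolding rankin_exponent_def inv_p_ln_p_upper_def inv_p_upper_def lam_def by real_asymp
  have "\<forall>\<^sub>F x::real in at_top. x > 0" by real_asymp
  with eventually_large_lam half exponent show ?thesis
  proof eventually_elim
    case (elim x)
    have "(\<Sum>m\<in>{1..nat \<lfloor>x\<rfloor>}. t x m / sqrt (real m)) \<ge> euler_prod x / 2"
      using elim(2) euler_prod_ge_1[of x] large_lam_imp[OF elim(1)] by (simp add: field_simps)
    from order_trans[OF coprime_double_sum_ratio_le[OF elim(1,4) this] exp_le_cancel_iff[THEN iffD2, OF elim(3)]]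
    show ?case unfolding Let_def rankin_exponent_def .
  qed
qed

theorem mainTheorem12:
  shows
   "(\<forall>z :: real \<Rightarrow> real.
       (\<forall>\<^sub>F x in at_top. z x > exp (3 * lam x * ln (ln (lam x)))) \<longrightarrow>
       (\<lambda>x. \<Sum>m\<in>{1..nat \<lfloor>z x\<rfloor>}. t x m / sqrt (real m))
         \<sim>[at_top]
       (\<lambda>x. \<Prod>p\<in>{p. prime p \<and> real p \<le> exp ((ln (lam x))^2)}. (1 + t x p / sqrt (real p))))
  \<and> (\<lambda>x. ln (\<Prod>p\<in>{p. prime p \<and> real p \<le> exp ((ln (lam x))^2)}. (1 + t x p / sqrt (real p))))
       \<sim>[at_top] (\<lambda>x. lam x / (2 * ln (lam x)))
  \<and> (\<forall>z :: real \<Rightarrow> real.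
       (\<forall>\<^sub>F x in at_top. z x > exp (3 * lam x * ln (ln (lam x)))) \<longrightarrow>
       (\<exists>\<epsilon> :: real \<Rightarrow> real. (\<epsilon> \<longlongrightarrow> 0) at_top \<and>
          (\<forall>\<^sub>F x in at_top.
            let \<alpha> = 1 / (ln (lam x))^3 in
            x powr (- \<alpha>) *
              (\<Sum>(m1, m2)\<in>{(m1, m2). m1 \<in> {1..nat \<lfloor>z x\<rfloor>} \<and> m2 \<in> {1..nat \<lfloor>z x\<rfloor>} \<and> coprime m1 m2}.
                 r x m1 * r x m2 / (real (m1 * m2)) powr (1/2 - \<alpha>) *
                 infsum (\<lambda>d. (r x d)^2 * real d powr \<alpha>) {d. d \<ge> 1 \<and> coprime d (m1 * m2)})
            / ((\<Sum>m\<in>{1..nat \<lfloor>x\<rfloor>}. t x m / sqrt (real m))^2 * infsum (\<lambda>d. (r x d)^2) {d. d \<ge> 1})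
            \<le> exp (- (1 + \<epsilon> x) * 32 * ln x / (ln (ln x))^4))))"
  by (intro conjI allI impI sum_t_div_sqrt_sim_euler_prod ln_euler_prod_sim exI[where x = "\<lambda>_. 0"])
    (simp_all add: coprime_double_sum_ratio_eventually_le[simplified])

end
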